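(* Let $S$ be an instance of SCS-RC, let $\mathcal C$ be the (optimal) cycle cover of $G_S$ produced by \textsf{MGREEDY-RC}, for each $C\in\mathcal C$ let $x_C$ be a string satisfying properties (1)–(4) below, and let $A=\{x_C: C\in\mathcal C\}$. Then $\mathrm{OPT}(A) \le \mathrm{OPT}(S) + w(\mathrm{CYC}(G_S))$.
   Context: Alphabet $\Sigma=\{\texttt a,\texttt t,\texttt g,\texttt c\}$ with complement $\bar{\texttt a}=\texttt t$, $\bar{\texttt t}=\texttt a$, $\bar{\texttt g}=\texttt c$, $\bar{\texttt c}=\texttt g$; the reverse complement of $s=b_1\cdots b_n$ is $\bar{s}^R=\bar{b_n}\cdots\bar{b_1}$, and $\bar S^R=\{\bar s^R: s\in S\}$. An instance of SCS-RC is a finite set $S=\{s_1,\dots,s_m\}$ of strings over $\Sigma$ such that no string of $S\cup\bar S^R$ is a substring of another; for a finite set $U$ of strings, $\mathrm{OPT}(U)$ is the minimum length of a string containing, for each $u\in U$, $u$ or $\bar u^R$ as a substring. For strings $x,y$, $\mathrm{ov}(x,y)$ is the length of the longest $v$ with $x=uv$, $y=vw$ for nonempty $u,w$; $\mathrm{pref}(x,y)=u$; $\mathrm{dist}(x,y)=|x|-\mathrm{ov}(x,y)$; $\langle x_1,\dots,x_r\rangle=\mathrm{pref}(x_1,x_2)\cdots\mathrm{pref}(x_{r-1},x_r)\,x_r$. The distance graph $G_S$ is the complete directed graph (with loops) on $S\cup\bar S^R$ with edge weights $\mathrm{dist}$; a cycle $z_1,\dots,z_r,z_1$ (distinct vertices)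 has weight $w(C)=\sum_i\mathrm{dist}(z_i,z_{i+1})$, $z_{r+1}=z_1$; a cycle cover contains, as vertex-disjoint cycles, exactly one of $s_i,\bar{s_i}^R$ for each $i$; $w(\mathrm{CYC}(G_S))$ is the minimum total weight of a cycle cover. \textsf{MGREEDY-RC} on $S$: set $T=\emptyset$; while $S\ne\emptyset$: among pairs $(x,y)\in (S\cup\bar S^R)^2$ with $x=y$, or with $x\ne y$ and $\bar x^R\ne y$, pick one maximizing $\mathrm{ov}(x,y)$ (ties arbitrary); if $x=y$, remove $x,\bar x^R$ from $S$ and add $x$ to $T$; otherwise remove $x,\bar x^R,y,\bar y^R$ from $S$ and add $\langle x,y\rangle$. Each current string $z$ is associated with a sequence $(z_1,\dots,z_h)$ of vertices with $z=\langle z_1,\dots,z_h\rangle$: initially $s_i\leftrightarrow(s_i)$; $\bar z^R\leftrightarrow(\bar{z_h}^R,\dots,\bar{z_1}^R)$; $\langle x,y\rangle$ gets the concatenation of the sequences of $x$ and $y$; when $z$ with sequence $(z_1,\dots,z_h)$ moves to $T$, the cycle $z_1,\dots,z_h,z_1$ is formed. These cycles form the cycle cover $\mathcal C$, which is optimal. Periodicity: for a finite string $s$, $\mathrm{factor}(s)$ is the shortest $x$ with $s=x^iy$, $i\ge1$, $y$ a (possibly empty) prefix of $x$; for a semi-infinite $s$ with $s=xs$ for some nonempty $x$, $\mathrm{factor}(s)$ is the shortest such $x$; $\mathrm{period}(s)=|\mathrm{factor}(s)|$. $x,y$ are equivalent if $\mathrm{factor}(x)=pq$, $\mathrm{factor}(y)=qp$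 for some $p,q$, inequivalent otherwise. For semi-infinite $\alpha=c_1c_2\cdots$, $\alpha[k]=c_kc_{k+1}\cdots$; $\mathrm{ov}(s,\alpha[k])$ is the length of the longest $v$ with $s=uv$, $u$ nonempty, $v$ a prefix of $\alpha[k]$. $\alpha[k]$ is a critical rotation of periodic $\alpha$ if $\mathrm{ov}(s,\alpha[k])\le\mathrm{period}(s)+\tfrac12\mathrm{period}(\alpha)$ for every finite $s$ inequivalent to $\alpha$. Properties of $x_C$, for $C=z_1,\dots,z_r,z_1$ with $(z_1,\dots,z_r)$ its sequence as produced by the algorithm: there is $j\in\{1,\dots,r\}$ such that (1) $\langle z_{j+1},\dots,z_r,z_1,\dots,z_j\rangle$ is a suffix of $x_C$; (2) $x_C$ is a substring of $y_C=\langle z_j,\dots,z_r,z_1,\dots,z_j\rangle$; (3) $x_C$ is equivalent to $\langle z_{j+1},\dots,z_r,z_1,\dots,z_j\rangle$; (4) $\mathrm{factor}(x_C)^\infty$ is a critical rotation of $\mathrm{factor}(\langle z_1,\dots,z_r\rangle)^\infty$. (Such strings are known to exist.) *)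

theory Defs
  imports Complex_Main "HOL-Library.Sublist"
begin

datatype base = bA | bT | bG | bC

type_synonym dna = "base list"

fun compl :: "base \<Rightarrow> base" where
  "compl bA = bT" | "compl bT = bA" | "compl bG = bC" | "compl bC = bG"

definition rc :: "dna \<Rightarrow> dna" where
  "rc s = rev (map compl s)"

definition vertices :: "dna set \<Rightarrow> dna set" where
  "vertices S = S \<union> rc ` S"

definition scs_rc_instance :: "dna set \<Rightarrow> bool" where
  "scs_rc_instance S \<longleftrightarrow> finite S \<and>
     (\<forall>u\<in>vertices S. \<forall>v\<in>vertices S. u \<noteq> v \<longrightarrow> \<not> sublist u v)"

definition OPT :: "dna set \<Rightarrow> nat" where
  "OPT U = (LEAST n. \<exists>w. length w = n \<and> (\<forall>u\<in>U. sublist u w \<or> sublist (rc u) w))"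

definition ov :: "dna \<Rightarrow> dna \<Rightarrow> nat" where
  "ov x y = Max (insert 0 {k. k < length x \<and> k < length y \<and> drop (length x - k) x = take k y})"

definition pref :: "dna \<Rightarrow> dna \<Rightarrow> dna" where
  "pref x y = take (length x - ov x y) x"

definition dst :: "dna \<Rightarrow> dna \<Rightarrow> nat" where
  "dst x y = length x - ov x y"

fun mrg :: "dna list \<Rightarrow> dna" where
  "mrg [] = []"
| "mrg [x] = x"
| "mrg (x # y # zs) = pref x y @ mrg (y # zs)"

definition cyc_weight :: "dna list \<Rightarrow> nat" where
  "cyc_weight zs = (\<Sum>i<length zs. dst (zs ! i) (zs ! ((i + 1) mod length zs)))"

definition is_cycle_cover :: "dna set \<Rightarrow> dna list list \<Rightarrow> bool" where
  "is_cycle_cover S cs \<longleftrightarrow>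
     (\<forall>c\<in>set cs. c \<noteq> []) \<and> distinct (concat cs) \<and>
     set (concat cs) \<subseteq> vertices S \<and>
     (\<forall>s\<in>S. (s \<in> set (concat cs) \<or> rc s \<in> set (concat cs)) \<and>
             (s \<noteq> rc s \<longrightarrow> \<not> (s \<in> set (concat cs) \<and> rc s \<in> set (concat cs))))"

definition wCYC :: "dna set \<Rightarrow> nat" where
  "wCYC S = (LEAST w. \<exists>cs. is_cycle_cover S cs \<and> w = sum_list (map cyc_weight cs))"

text \<open>A current string together with its associated sequence of vertices.\<close>
type_synonym item = "dna \<times> dna list"

definition rcI :: "item \<Rightarrow> item" where
  "rcI it = (rc (fst it), rev (map rc (snd it)))"

definition items :: "item set \<Rightarrow> item set" where
  "items P = P \<union> rcI ` P"

definition allowed :: "item set \<Rightarrow> item \<Rightarrow> item \<Rightarrow> bool" where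
  "allowed P x y \<longleftrightarrow> x \<in> items P \<and> y \<in> items P \<and> (x = y \<or> (x \<noteq> y \<and> rcI x \<noteq> y))"

definition greedy_max :: "item set \<Rightarrow> item \<Rightarrow> item \<Rightarrow> bool" where
  "greedy_max P x y \<longleftrightarrow> allowed P x y \<and>
     (\<forall>x' y'. allowed P x' y' \<longrightarrow> ov (fst x') (fst y') \<le> ov (fst x) (fst y))"

text \<open>greedy_run S P Cs: some execution of MGREEDY-RC (ties broken arbitrarily) on S reaches a
  state whose current strings (one orientation per string, with associated sequences) are P and
  whose cycles formed so far are Cs (in order). The produced cycle cover is Cs when P = {}.\<close>
inductive greedy_run :: "dna set \<Rightarrow> item set \<Rightarrow> dna list list \<Rightarrow> bool" for S where
  init: "greedy_run S ((\<lambda>s. (s, [s])) ` S) []"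
| close: "greedy_run S P Cs \<Longrightarrow> greedy_max P x x \<Longrightarrow>
           greedy_run S (P - {x, rcI x}) (Cs @ [snd x])"
| join: "greedy_run S P Cs \<Longrightarrow> greedy_max P x y \<Longrightarrow> x \<noteq> y \<Longrightarrow>
           greedy_run S (insert (pref (fst x) (fst y) @ fst y, snd x @ snd y)
                                (P - {x, rcI x, y, rcI y})) Cs"

definition fac_decomp :: "dna \<Rightarrow> dna \<Rightarrow> bool" where
  "fac_decomp s x \<longleftrightarrow> (\<exists>i y. i \<ge> 1 \<and> s = concat (replicate i x) @ y \<and> prefix y x)"

definition sfactor :: "dna \<Rightarrow> dna" where
  "sfactor s = (SOME x. fac_decomp s x \<and> (\<forall>x'. fac_decomp s x' \<longrightarrow> length x \<le> length x'))"

definition speriod :: "dna \<Rightarrow> nat" where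
  "speriod s = length (sfactor s)"

text \<open>Semi-infinite strings c_1 c_2 ... are functions nat \<Rightarrow> base (c_{n+1} at index n).\<close>
type_synonym inf = "nat \<Rightarrow> base"

definition cons_inf :: "dna \<Rightarrow> inf \<Rightarrow> inf" where
  "cons_inf x \<alpha> = (\<lambda>n. if n < length x then x ! n else \<alpha> (n - length x))"

definition inf_period :: "inf \<Rightarrow> dna \<Rightarrow> bool" where
  "inf_period \<alpha> x \<longleftrightarrow> x \<noteq> [] \<and> \<alpha> = cons_inf x \<alpha>"

definition periodic_inf :: "inf \<Rightarrow> bool" where
  "periodic_inf \<alpha> \<longleftrightarrow> (\<exists>x. inf_period \<alpha> x)"

definition ifactor :: "inf \<Rightarrow> dna" where
  "ifactor \<alpha> = (SOME x. inf_period \<alpha> x \<and> (\<forall>x'. inf_period \<alpha> x' \<longrightarrow> length x \<le> length x'))"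

definition iperiod :: "inf \<Rightarrow> nat" where
  "iperiod \<alpha> = length (ifactor \<alpha>)"

definition omega :: "dna \<Rightarrow> inf" where
  "omega x = (\<lambda>n. x ! (n mod length x))"

text \<open>\<alpha>[k] = c_k c_{k+1} ... (k \<ge> 1)\<close>
definition shift :: "inf \<Rightarrow> nat \<Rightarrow> inf" where
  "shift \<alpha> k = (\<lambda>n. \<alpha> (n + k - 1))"

definition ov_inf :: "dna \<Rightarrow> inf \<Rightarrow> nat" where
  "ov_inf s \<beta> = Max (insert 0 {k. k < length s \<and> (\<forall>i<k. drop (length s - k) s ! i = \<beta> i)})"

definition fac_equiv :: "dna \<Rightarrow> dna \<Rightarrow> bool" where
  "fac_equiv f g \<longleftrightarrow> (\<exists>p q. f = p @ q \<and> g = q @ p)"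

definition equivalent :: "dna \<Rightarrow> dna \<Rightarrow> bool" where
  "equivalent x y \<longleftrightarrow> fac_equiv (sfactor x) (sfactor y)"

definition equivalent_inf :: "dna \<Rightarrow> inf \<Rightarrow> bool" where
  "equivalent_inf s \<alpha> \<longleftrightarrow> fac_equiv (sfactor s) (ifactor \<alpha>)"

definition critical_rotation :: "inf \<Rightarrow> nat \<Rightarrow> bool" where
  "critical_rotation \<alpha> k \<longleftrightarrow> periodic_inf \<alpha> \<and> k \<ge> 1 \<and>
     (\<forall>s. \<not> equivalent_inf s \<alpha> \<longrightarrow>
        real (ov_inf s (shift \<alpha> k)) \<le> real (speriod s) + real (iperiod \<alpha>) / 2)"

text \<open>zs = [z_1,...,z_r] is the sequence of cycle C; rotate j zs = [z_{j+1},...,z_r,z_1,...,z_j];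
  z_j = zs ! (j - 1).\<close>
definition xC_props :: "dna list \<Rightarrow> dna \<Rightarrow> bool" where
  "xC_props zs x \<longleftrightarrow> (\<exists>j\<in>{1..length zs}.
      suffix (mrg (rotate j zs)) x \<and>
      sublist x (mrg (zs ! (j - 1) # rotate j zs)) \<and>
      equivalent x (mrg (rotate j zs)) \<and>
      (\<exists>k\<ge>1. omega (sfactor x) = shift (omega (sfactor (mrg zs))) k \<and>
              critical_rotation (omega (sfactor (mrg zs))) k))"

end

theory Submission
  imports Defs "HOL-Library.Multiset"
begin

text \<open>
  First, MGREEDY-RC yields a minimum cycle cover. This is an exchange argument. At every stage,
  every cycle cover of \<open>G\<^sub>S\<close> corresponds to a cover of the current strings by cycles,
  and the weight of that cover plus the weight of the cycles already closed is at most the weight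
  of the original cycle cover. The Monge inequality for overlaps
  (\<open>ov(a,d) + ov(c,b) \<le> ov(a,b) + ov(c,d)\<close> whenever \<open>ov(a,b)\<close> is maximal)
  lets us rearrange the cover so that it uses the greedy edge without increasing its weight.
  Contracting that edge (or closing that loop) then preserves the bound. When no strings remain,
  the cover is empty.

  Second, take a shortest string \<open>w\<close> that contains each string of \<open>S\<close> or its reverse complement,
  and for each cycle \<open>C\<close> take the vertex \<open>z = z\<^sub>j\<close>. The string
  \<open>y\<^sub>C = \<langle>z\<^sub>j,\<dots>,z\<^sub>r,z\<^sub>1,\<dots>,z\<^sub>j\<rangle>\<close> has \<open>z\<close> as a prefix and a suffix, has length
  \<open>w(C) + |z|\<close>, and contains \<open>x\<^sub>C\<close>. Merging the orientations of the \<open>z\<close> that occur in \<open>w\<close>,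
  in the order of their first occurrences, gives a string of length at most \<open>|w|\<close>, because
  none of them is a substring of another. Replacing each \<open>z\<close> by the correspondingly oriented
  \<open>y\<^sub>C\<close> adds at most \<open>w(C)\<close> for each cycle.
\<close>

lemma compl_compl [simp]: "compl (compl b) = b"
  by (cases b) auto

lemma length_rc [simp]: "length (rc s) = length s"
  by (simp add: rc_def)

lemma rc_rc [simp]: "rc (rc s) = s"
  by (simp add: rc_def rev_map comp_def)

lemma rc_append [simp]: "rc (a @ b) = rc b @ rc a"
  by (simp add: rc_def)

lemma rc_inject [simp]: "rc a = rc b \<longleftrightarrow> a = b"
  by (metis rc_rc)

lemma rc_nth: "i < length s \<Longrightarrow> rc s ! i = compl (s ! (length s - Suc i))"
  by (simp add: rc_def rev_nth)

lemma vertices_rc: "v \<in> vertices S \<Longrightarrow> rc v \<in> vertices S"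
  by (auto simp: vertices_def)

lemma sublist_rc: "sublist x y \<Longrightarrow> sublist (rc x) (rc y)"
  by (auto simp: sublist_def) (metis append_assoc rc_append)

lemma prefix_imp_suffix_rc: "prefix a b \<Longrightarrow> suffix (rc a) (rc b)"
  by (auto simp: prefix_def suffix_def)

lemma suffix_imp_prefix_rc: "suffix a b \<Longrightarrow> prefix (rc a) (rc b)"
  by (auto simp: prefix_def suffix_def)

lemma sublist_conv_nth:
  "sublist w z \<longleftrightarrow> (\<exists>i. i + length w \<le> length z \<and> (\<forall>j<length w. z ! (i + j) = w ! j))"
proof
  assume "sublist w z"
  then obtain p s where z: "z = p @ w @ s" by (auto simp: sublist_def)
  then show "\<exists>i. i + length w \<le> length z \<and> (\<forall>j<length w. z ! (i + j) = w ! j)"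
    by (intro exI[of _ "length p"]) (auto simp: nth_append)
next
  assume "\<exists>i. i + length w \<le> length z \<and> (\<forall>j<length w. z ! (i + j) = w ! j)"
  then obtain i where i: "i + length w \<le> length z" "\<forall>j<length w. z ! (i + j) = w ! j" by auto
  have "w = take (length w) (drop i z)" using i by (intro nth_equalityI) auto
  then have "z = take i z @ w @ drop (length w) (drop i z)"
    by (metis append_take_drop_id)
  then show "sublist w z" unfolding sublist_def by blast
qed

lemma prefix_conv_nth: "prefix w z \<longleftrightarrow> length w \<le> length z \<and> (\<forall>j<length w. z ! j = w ! j)"
proof
  assume "prefix w z" then show "length w \<le> length z \<and> (\<forall>j<length w. z ! j = w ! j)"
    by (auto simp: prefix_def nth_append)
next
  assume a: "length w \<le> length z \<and> (\<forall>j<length w. z ! j = w ! j)"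
  have "w = take (length w) z" using a by (intro nth_equalityI) auto
  then show "prefix w z" by (metis prefix_def append_take_drop_id)
qed

lemma suffix_conv_nth:
  "suffix w z \<longleftrightarrow> length w \<le> length z \<and> (\<forall>j<length w. z ! (length z - length w + j) = w ! j)"
proof
  assume "suffix w z" then obtain p where "z = p @ w" by (auto simp: suffix_def)
  then show "length w \<le> length z \<and> (\<forall>j<length w. z ! (length z - length w + j) = w ! j)"
    by (auto simp: nth_append)
next
  assume a: "length w \<le> length z \<and> (\<forall>j<length w. z ! (length z - length w + j) = w ! j)"
  have "w = drop (length z - length w) z" using a by (intro nth_equalityI) auto
  then show "suffix w z" by (metis suffix_def append_take_drop_id)
qed

lemma suffix_nth: "suffix w z \<Longrightarrow> j < length w \<Longrightarrow> n = length z - length w + j \<Longrightarrow> z ! n = w ! j"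
  unfolding suffix_conv_nth by metis

lemma sublist_iff_prefix_drop: "sublist x w \<longleftrightarrow> (\<exists>q. prefix x (drop q w))"
proof
  assume "sublist x w"
  then obtain p s where "w = p @ x @ s" by (auto simp: sublist_def)
  then have "prefix x (drop (length p) w)" by simp
  then show "\<exists>q. prefix x (drop q w)" by blast
next
  assume "\<exists>q. prefix x (drop q w)"
  then obtain q where "prefix x (drop q w)" by blast
  then show "sublist x w" by (meson prefix_imp_sublist sublist_drop sublist_order.order.trans)
qed

lemma sublist_concat: "u \<in> set xs \<Longrightarrow> sublist u (concat xs)"
  by (metis concat_append concat.simps(2) split_list sublist_appendI)

section \<open>Overlaps\<close>

lemma ov_candidates_finite:
  "finite {k. k < length x \<and> k < length y \<and> drop (length x - k) x = take k y}"
  by (rule finite_subset[of _ "{..<length x}"]) auto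

lemma ov_cases:
  "ov x y = 0 \<or> (ov x y < length x \<and> ov x y < length y \<and> drop (length x - ov x y) x = take (ov x y) y)"
proof -
  let ?A = "{k. k < length x \<and> k < length y \<and> drop (length x - k) x = take k y}"
  have "ov x y \<in> insert 0 ?A" unfolding ov_def using ov_candidates_finite by (intro Max_in) auto
  then show ?thesis by auto
qed

lemma ov_drop_eq_take: "drop (length x - ov x y) x = take (ov x y) y"
  using ov_cases[of x y] by auto

lemma ov_maximal:
  "k < length x \<Longrightarrow> k < length y \<Longrightarrow> drop (length x - k) x = take k y \<Longrightarrow> k \<le> ov x y"
  unfolding ov_def using ov_candidates_finite by (intro Max_ge) auto

lemma ov_le_length_left: "ov x y \<le> length x"
  using ov_cases[of x y] by auto

lemma ov_le_length_right: "ov x y \<le> length y"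
  using ov_cases[of x y] by auto

lemma ov_less_lengths: "ov x y \<noteq> 0 \<Longrightarrow> ov x y < length x \<and> ov x y < length y"
  using ov_cases[of x y] by auto

lemma dst_add_ov: "dst a b + ov a b = length a"
  by (simp add: dst_def ov_le_length_left)

lemma ov_nth: "i < ov x y \<Longrightarrow> x ! (length x - ov x y + i) = y ! i"
proof -
  assume i: "i < ov x y"
  have "drop (length x - ov x y) x ! i = take (ov x y) y ! i" by (simp add: ov_drop_eq_take)
  then show ?thesis using i ov_le_length_left[of x y] ov_le_length_right[of x y] by simp
qed

lemma ov_geI:
  "k < length x \<Longrightarrow> k < length y \<Longrightarrow> (\<And>i. i < k \<Longrightarrow> x ! (length x - k + i) = y ! i) \<Longrightarrow> k \<le> ov x y"
  by (rule ov_maximal) (auto intro!: nth_equalityI)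

lemma ov_le_ov_rc: "ov x y \<le> ov (rc y) (rc x)"
proof (cases "ov x y = 0")
  case False
  then have l: "ov x y < length x" "ov x y < length y" using ov_less_lengths by auto
  show ?thesis
  proof (rule ov_geI)
    fix i assume i: "i < ov x y"
    let ?k = "ov x y"
    have "rc y ! (length y - ?k + i) = compl (y ! (length y - Suc (length y - ?k + i)))"
      using l i by (simp add: rc_nth)
    also have "length y - Suc (length y - ?k + i) = ?k - Suc i" using l i by simp
    also have "y ! (?k - Suc i) = x ! (length x - ?k + (?k - Suc i))"
      using ov_nth[of "?k - Suc i" x y] i by simp
    also have "length x - ?k + (?k - Suc i) = length x - Suc i" using l i by simp
    finally show "rc y ! (length (rc y) - ?k + i) = rc x ! i" using l i by (simp add: rc_nth)
  qed (use l in auto)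
qed simp

lemma ov_rc [simp]: "ov (rc y) (rc x) = ov x y"
  using ov_le_ov_rc[of x y] ov_le_ov_rc[of "rc y" "rc x"] by simp

lemma ov_le_of_suffix_prefix: "suffix a X \<Longrightarrow> prefix b Y \<Longrightarrow> ov a b \<le> ov X Y"
proof (cases "ov a b = 0")
  case False
  assume s: "suffix a X" and p: "prefix b Y"
  have l: "ov a b < length a" "ov a b < length b" using ov_less_lengths[OF False] by auto
  have la: "length a \<le> length X" and lb: "length b \<le> length Y" using s p
    by (auto simp: suffix_conv_nth prefix_conv_nth)
  show ?thesis
  proof (rule ov_geI)
    fix i assume i: "i < ov a b"
    have "X ! (length X - ov a b + i) = a ! (length a - ov a b + i)"
      by (rule suffix_nth[OF s]) (use l la i in auto)
    also have "\<dots> = b ! i" using ov_nth[OF i] .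
    also have "\<dots> = Y ! i" using p l i by (simp add: prefix_conv_nth)
    finally show "X ! (length X - ov a b + i) = Y ! i" .
  qed (use l la lb in auto)
qed simp

lemma ov_le_inner:
  assumes s: "suffix a X" and p: "prefix b Y" and l: "ov X Y < length a" "ov X Y < length b"
  shows "ov X Y \<le> ov a b"
proof -
  have la: "length a \<le> length X" using s by (auto simp: suffix_conv_nth)
  show ?thesis
  proof (rule ov_geI)
    fix i assume i: "i < ov X Y"
    have "a ! (length a - ov X Y + i) = X ! (length X - ov X Y + i)"
      by (rule suffix_nth[OF s, symmetric]) (use l la i in auto)
    also have "\<dots> = Y ! i" using ov_nth[OF i] .
    also have "\<dots> = b ! i" using p l i by (simp add: prefix_conv_nth)
    finally show "a ! (length a - ov X Y + i) = b ! i" .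
  qed (use l in auto)
qed

lemma ov_eq_of_suffix_prefix:
  "suffix a X \<Longrightarrow> prefix b Y \<Longrightarrow> (ov X Y \<noteq> 0 \<longrightarrow> ov X Y < length a \<and> ov X Y < length b) \<Longrightarrow>
    ov a b = ov X Y"
  using ov_le_of_suffix_prefix[of a X b Y] ov_le_inner[of a X b Y] by (cases "ov X Y = 0") auto

text \<open>When \<open>ov(a,d) + ov(c,b)\<close> exceeds the maximal \<open>ov(a,b)\<close>, the suffix of \<open>c\<close> that
  overlaps \<open>b\<close> and the prefix of \<open>d\<close> that overlaps \<open>a\<close> meet inside the overlap of \<open>a\<close> with \<open>b\<close>;
  their common part, of length \<open>ov(a,d) + ov(c,b) - ov(a,b)\<close>, is an overlap of \<open>c\<close> with \<open>d\<close>.\<close>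

lemma ov_monge:
  assumes "ov a d \<le> ov a b" "ov c b \<le> ov a b"
  shows "ov a d + ov c b \<le> ov a b + ov c d"
proof (cases "ov a d + ov c b \<le> ov a b")
  case True then show ?thesis by simp
next
  case False
  define k where "k = ov a b"
  define p where "p = ov a d"
  define q where "q = ov c b"
  define m where "m = p + q - k"
  have pk: "p \<le> k" "q \<le> k" using assms by (auto simp: k_def p_def q_def)
  have m0: "m > 0" "p > 0" "q > 0" using False pk by (auto simp: m_def k_def p_def q_def)
  have lp: "p < length a" "p < length d" using ov_less_lengths[of a d] m0 by (auto simp: p_def)
  have lq: "q < length c" "q < length b" using ov_less_lengths[of c b] m0 by (auto simp: q_def)
  have lk: "k < length a" "k < length b" using ov_less_lengths[of a b] m0 pk by (auto simp: k_def)
  have "m \<le> ov c d"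
  proof (rule ov_geI)
    fix i assume i: "i < m"
    have "c ! (length c - m + i) = c ! (length c - q + (q - m + i))"
      by (rule arg_cong[where f="(!) c"]) (use i lq pk m0 in \<open>simp add: m_def\<close>)
    also have "\<dots> = b ! (q - m + i)"
      using ov_nth[of "q - m + i" c b] i pk by (simp add: q_def m_def)
    also have "\<dots> = a ! (length a - k + (q - m + i))"
      using ov_nth[of "q - m + i" a b] i pk by (simp add: k_def m_def)
    also have "length a - k + (q - m + i) = length a - p + i" using i pk lk m0 by (simp add: m_def)
    also have "a ! \<dots> = d ! i" using ov_nth[of i a d] i pk by (simp add: p_def m_def)
    finally show "c ! (length c - m + i) = d ! i" .
  qed (use lp lq pk in \<open>auto simp: m_def\<close>)
  then show ?thesis using pk by (simp add: m_def k_def p_def q_def)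
qed

lemma ov_suffix_mono: "suffix Y Z \<Longrightarrow> ov Z W \<le> ov Y W \<or> sublist Y W"
proof (cases "ov Z W = 0")
  case False
  assume s: "suffix Y Z"
  let ?m = "ov Z W"
  have l: "?m < length Z" "?m < length W" using ov_less_lengths[OF False] by auto
  have ly: "length Y \<le> length Z" using s by (auto simp: suffix_conv_nth)
  show ?thesis
  proof (cases "length Y \<le> ?m")
    case True
    have "sublist Y W" unfolding sublist_conv_nth
    proof (intro exI[of _ "?m - length Y"] conjI allI impI)
      fix j assume j: "j < length Y"
      have "W ! (?m - length Y + j) = Z ! (length Z - ?m + (?m - length Y + j))"
        using ov_nth[of "?m - length Y + j" Z W] j True by simp
      also have "\<dots> = Y ! j" by (rule suffix_nth[OF s j]) (use True l j in auto)
      finally show "W ! (?m - length Y + j) = Y ! j" .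
    qed (use True l in auto)
    then show ?thesis by simp
  next
    case False
    have "?m \<le> ov Y W"
    proof (rule ov_geI)
      fix i assume i: "i < ?m"
      have "Y ! (length Y - ?m + i) = Z ! (length Z - ?m + i)"
        by (rule suffix_nth[OF s, symmetric]) (use False ly i in auto)
      also have "\<dots> = W ! i" using ov_nth[OF i] .
      finally show "Y ! (length Y - ?m + i) = W ! i" .
    qed (use False l in auto)
    then show ?thesis by simp
  qed
qed simp

lemma ov_prefix_mono: "prefix X Z \<Longrightarrow> ov W Z \<le> ov W X \<or> sublist X W"
  using ov_suffix_mono[OF prefix_imp_suffix_rc, of X Z "rc W"] sublist_rc[of "rc X" "rc W"] by auto

definition mrg2 :: "dna \<Rightarrow> dna \<Rightarrow> dna" where
  "mrg2 X Y = pref X Y @ Y"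

lemma length_pref: "length (pref X Y) = length X - ov X Y"
  by (simp add: pref_def)

lemma length_mrg2: "length (mrg2 X Y) = length X - ov X Y + length Y"
  by (simp add: mrg2_def length_pref)

lemma mrg2_nth_left: "n < length X \<Longrightarrow> mrg2 X Y ! n = X ! n"
proof -
  assume n: "n < length X"
  show ?thesis
  proof (cases "n < length X - ov X Y")
    case True then show ?thesis by (simp add: mrg2_def pref_def nth_append)
  next
    case False
    have "mrg2 X Y ! n = Y ! (n - (length X - ov X Y))"
      using False by (simp add: mrg2_def pref_def nth_append)
    also have "\<dots> = X ! (length X - ov X Y + (n - (length X - ov X Y)))"
      using ov_nth[of "n - (length X - ov X Y)" X Y] False n by simp
    also have "length X - ov X Y + (n - (length X - ov X Y)) = n" using False by simp
    finally show ?thesis .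
  qed
qed

lemma mrg2_nth_right: "length X - ov X Y \<le> n \<Longrightarrow> mrg2 X Y ! n = Y ! (n - (length X - ov X Y))"
  by (simp add: mrg2_def pref_def nth_append ov_le_length_left)

lemma prefix_mrg2: "prefix X (mrg2 X Y)"
  unfolding prefix_conv_nth using mrg2_nth_left[of _ X Y] ov_le_length_right[of X Y]
  by (simp add: length_mrg2)

lemma suffix_mrg2: "suffix Y (mrg2 X Y)"
  unfolding mrg2_def suffix_def by auto

lemma ov_mrg2_self_short:
  assumes short: "ov (mrg2 X Y) (mrg2 X Y) < length X"
  shows "ov (mrg2 X Y) (mrg2 X Y) \<le> ov Y X \<or> sublist Y X"
proof (cases "ov (mrg2 X Y) (mrg2 X Y) = 0")
  case False
  define Z where "Z = mrg2 X Y"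
  define m where "m = ov Z Z"
  define s where "s = length X - ov X Y"
  have l: "m < length Z" using ov_less_lengths False by (auto simp: m_def Z_def)
  have lZ: "length Z = s + length Y" by (simp add: Z_def s_def length_mrg2)
  have zx: "\<And>n. n < length X \<Longrightarrow> Z ! n = X ! n" by (simp add: Z_def mrg2_nth_left)
  have zy: "\<And>n. s \<le> n \<Longrightarrow> Z ! n = Y ! (n - s)" by (simp add: Z_def s_def mrg2_nth_right)
  have zz: "\<And>i. i < m \<Longrightarrow> Z ! (length Z - m + i) = Z ! i" by (simp add: m_def ov_nth)
  have mX: "m < length X" using short by (simp add: m_def Z_def)
  show ?thesis
  proof (cases "m < length Y")
    case True
    have "m \<le> ov Y X"
    proof (rule ov_geI)
      fix i assume i: "i < m"
      have "Y ! (length Y - m + i) = Z ! (length Z - m + i)"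
        using zy[of "length Z - m + i"] True i lZ by simp
      also have "\<dots> = X ! i" using zz[OF i] zx[of i] i mX by simp
      finally show "Y ! (length Y - m + i) = X ! i" .
    qed (use True mX in auto)
    then show ?thesis by (simp add: m_def Z_def)
  next
    case False
    have "sublist Y X" unfolding sublist_conv_nth
    proof (intro exI[of _ "m - length Y"] conjI allI impI)
      fix j assume j: "j < length Y"
      have "X ! (m - length Y + j) = Z ! (m - length Y + j)"
        using zx[of "m - length Y + j"] False mX j by simp
      also have "\<dots> = Z ! (length Z - m + (m - length Y + j))"
        using zz[of "m - length Y + j"] False j by simp
      also have "length Z - m + (m - length Y + j) = s + j" using False l lZ j by simp
      also have "Z ! (s + j) = Y ! j" using zy[of "s + j"] by simp
      finally show "X ! (m - length Y + j) = Y ! j" .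
    qed (use False mX in auto)
    then show ?thesis by simp
  qed
qed simp

lemma ov_mrg2_self_long:
  assumes long: "length X \<le> ov (mrg2 X Y) (mrg2 X Y)"
  shows "sublist X Y \<or> ov X Y < ov X X"
proof (cases "X = []")
  case False
  define Z where "Z = mrg2 X Y"
  define m where "m = ov Z Z"
  define s where "s = length X - ov X Y"
  define i where "i = length Z - m"
  have "m \<noteq> 0" using long False unfolding m_def Z_def by (metis le_zero_eq length_0_conv)
  then have l: "m < length Z" using ov_less_lengths by (auto simp: m_def)
  have lZ: "length Z = s + length Y" by (simp add: Z_def s_def length_mrg2)
  have zx: "\<And>n. n < length X \<Longrightarrow> Z ! n = X ! n" by (simp add: Z_def mrg2_nth_left)
  have zy: "\<And>n. s \<le> n \<Longrightarrow> Z ! n = Y ! (n - s)" by (simp add: Z_def s_def mrg2_nth_right)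
  have zz: "\<And>i. i < m \<Longrightarrow> Z ! (length Z - m + i) = Z ! i" by (simp add: m_def ov_nth)
  have Xm: "length X \<le> m" using long by (simp add: m_def Z_def)
  have occ: "\<And>j. j < length X \<Longrightarrow> Z ! (i + j) = X ! j"
    using zz zx Xm by (simp add: i_def)
  show ?thesis
  proof (cases "s \<le> i")
    case True
    have "sublist X Y" unfolding sublist_conv_nth
    proof (intro exI[of _ "i - s"] conjI allI impI)
      fix j assume j: "j < length X"
      have "Y ! (i - s + j) = Z ! (i + j)" using zy[of "i + j"] True by simp
      then show "Y ! (i - s + j) = X ! j" using occ j by simp
    qed (use True Xm lZ l in \<open>auto simp: i_def\<close>)
    then show ?thesis by simp
  next
    case False
    have "length X - i \<le> ov X X"
    proof (rule ov_geI)
      fix t assume t: "t < length X - i"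
      have "X ! (length X - (length X - i) + t) = X ! (i + t)" using False t by (simp add: s_def)
      also have "\<dots> = Z ! (i + t)" using zx[of "i + t"] t by simp
      also have "\<dots> = Z ! t" using zz[of t] t Xm by (simp add: i_def)
      also have "\<dots> = X ! t" using zx t by simp
      finally show "X ! (length X - (length X - i) + t) = X ! t" .
    qed (use l False in \<open>auto simp: s_def i_def\<close>)
    moreover have "ov X Y < length X - i" using False by (simp add: s_def)
    ultimately show ?thesis by simp
  qed
qed simp

lemma ov_mrg2_self:
  "ov (mrg2 X Y) (mrg2 X Y) \<le> ov Y X \<or> sublist Y X \<or> sublist X Y \<or> ov X Y < ov X X"
  using ov_mrg2_self_short[of X Y] ov_mrg2_self_long[of X Y] by linarith

lemma sublist_mrg2:
  "sublist W (mrg2 X Y) \<Longrightarrow> sublist W X \<or> sublist W Y \<or> sublist X W \<or> ov X Y < ov X W"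
proof -
  assume "sublist W (mrg2 X Y)"
  then obtain i where i: "i + length W \<le> length (mrg2 X Y)" "\<forall>j<length W. mrg2 X Y ! (i + j) = W ! j"
    unfolding sublist_conv_nth by auto
  define s where "s = length X - ov X Y"
  have lZ: "length (mrg2 X Y) = s + length Y" by (simp add: s_def length_mrg2)
  show ?thesis
  proof (cases "i + length W \<le> length X")
    case True
    have "sublist W X" unfolding sublist_conv_nth
      using True i mrg2_nth_left[of "i + _" X Y] by (intro exI[of _ i]) auto
    then show ?thesis by simp
  next
    case nX: False
    show ?thesis
    proof (cases "s \<le> i")
      case True
      have "sublist W Y" unfolding sublist_conv_nth
      proof (intro exI[of _ "i - s"] conjI allI impI)
        fix j assume j: "j < length W"
        show "Y ! (i - s + j) = W ! j"
          using mrg2_nth_right[of X Y "i + j"] True i j by (simp add: s_def)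
      qed (use True i lZ in auto)
      then show ?thesis by simp
    next
      case False
      show ?thesis
      proof (cases "i = 0")
        case True
        have "sublist X W" unfolding sublist_conv_nth
          using True i nX mrg2_nth_left[of _ X Y] by (intro exI[of _ 0]) auto
        then show ?thesis by simp
      next
        case i0: False
        have "length X - i \<le> ov X W"
        proof (rule ov_geI)
          fix t assume t: "t < length X - i"
          have "X ! (length X - (length X - i) + t) = X ! (i + t)"
            using False t by (simp add: s_def)
          also have "\<dots> = mrg2 X Y ! (i + t)" using mrg2_nth_left[of "i + t" X Y] t by simp
          also have "\<dots> = W ! t" using i t nX by simp
          finally show "X ! (length X - (length X - i) + t) = W ! t" .
        qed (use i0 nX False in \<open>auto simp: s_def\<close>)
        moreover have "ov X Y < length X - i" using False by (simp add: s_def)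
        ultimately show ?thesis by simp
      qed
    qed
  qed
qed

lemma rc_mrg2: "rc (mrg2 X Y) = mrg2 (rc Y) (rc X)"
proof -
  let ?k = "ov X Y"
  have X: "rc X = rc (take ?k Y) @ rc (pref X Y)"
    using ov_drop_eq_take[of X Y] by (simp add: pref_def) (metis append_take_drop_id rc_append)
  have "pref (rc Y) (rc X) = rc (drop ?k Y)"
    by (simp add: pref_def) (metis drop_map length_map rc_def rev_drop)
  then have "mrg2 (rc Y) (rc X) = rc (drop ?k Y) @ rc (take ?k Y) @ rc (pref X Y)"
    using X by (simp add: mrg2_def)
  also have "\<dots> = rc (mrg2 X Y)"
    by (simp add: mrg2_def) (metis append_take_drop_id rc_append)
  finally show ?thesis by simp
qed

fun path_sum :: "('a \<Rightarrow> 'a \<Rightarrow> nat) \<Rightarrow> 'a list \<Rightarrow> nat" where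
  "path_sum f (a # b # l) = f a b + path_sum f (b # l)"
| "path_sum f _ = 0"

definition cycle_sum :: "('a \<Rightarrow> 'a \<Rightarrow> nat) \<Rightarrow> 'a list \<Rightarrow> nat" where
  "cycle_sum f l = (case l of [] \<Rightarrow> 0 | a # _ \<Rightarrow> path_sum f (l @ [a]))"

lemma path_sum_append:
  "l1 \<noteq> [] \<Longrightarrow> l2 \<noteq> [] \<Longrightarrow>
    path_sum f (l1 @ l2) = path_sum f l1 + f (last l1) (hd l2) + path_sum f l2"
proof (induction l1)
  case (Cons a l)
  show ?case
  proof (cases l)
    case Nil then show ?thesis using Cons.prems by (cases l2) auto
  next
    case (Cons b l') then show ?thesis using Cons.IH Cons.prems by auto
  qed
qed simp

lemma path_sum_snoc: "l \<noteq> [] \<Longrightarrow> path_sum f (l @ [a]) = path_sum f l + f (last l) a"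
  using path_sum_append[of l "[a]" f] by simp

lemma cycle_sum_Nil [simp]: "cycle_sum f [] = 0"
  by (simp add: cycle_sum_def)

lemma cycle_sum_eq: "l \<noteq> [] \<Longrightarrow> cycle_sum f l = path_sum f l + f (last l) (hd l)"
proof -
  assume "l \<noteq> []"
  then obtain a t where l: "l = a # t" by (cases l) auto
  have "path_sum f ((a # t) @ [a]) = path_sum f (a # t) + f (last (a # t)) a"
    by (rule path_sum_snoc) simp
  then show ?thesis using l by (simp add: cycle_sum_def)
qed

lemma cycle_sum_swap: "cycle_sum f (l1 @ l2) = cycle_sum f (l2 @ l1)"
  by (cases "l1 = [] \<or> l2 = []") (auto simp: cycle_sum_eq path_sum_append)

lemma cycle_sum_rotate: "cycle_sum f (rotate n zs) = cycle_sum f zs"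
  using cycle_sum_swap[of f "drop (n mod length zs) zs" "take (n mod length zs) zs"]
  by (simp add: rotate_drop_take)

lemma path_sum_add: "path_sum (\<lambda>a b. f a b + g a b) l = path_sum f l + path_sum g l"
  by (induction f l rule: path_sum.induct) auto

lemma path_sum_cong:
  "(\<And>a b. a \<in> set l \<Longrightarrow> b \<in> set l \<Longrightarrow> f a b = g a b) \<Longrightarrow> path_sum f l = path_sum g l"
  by (induction f l rule: path_sum.induct) auto

lemma cycle_sum_cong:
  "(\<And>a b. a \<in> set l \<Longrightarrow> b \<in> set l \<Longrightarrow> f a b = g a b) \<Longrightarrow> cycle_sum f l = cycle_sum g l"
  by (cases "l = []") (auto simp: cycle_sum_eq intro!: path_sum_cong)

lemma path_sum_map: "path_sum f (map h l) = path_sum (\<lambda>a b. f (h a) (h b)) l"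
  by (induction "\<lambda>a b. f (h a) (h b)" l rule: path_sum.induct) auto

lemma cycle_sum_map: "cycle_sum f (map h l) = cycle_sum (\<lambda>a b. f (h a) (h b)) l"
  by (cases "l = []") (auto simp: cycle_sum_eq path_sum_map hd_map last_map)

lemma path_sum_rev: "path_sum f (rev l) = path_sum (\<lambda>a b. f b a) l"
proof (induction l)
  case (Cons a l)
  show ?case
  proof (cases l)
    case Nil then show ?thesis by simp
  next
    case (Cons b l')
    have "path_sum f (rev (a # l)) = path_sum f (rev l @ [a])" by simp
    also have "\<dots> = path_sum f (rev l) + f (last (rev l)) a"
      using Cons by (intro path_sum_snoc) simp
    also have "last (rev l) = b" using Cons by (simp add: last_rev)
    finally show ?thesis using Cons.IH Cons by simp
  qed
qed simp

lemma cycle_sum_rev_map: "cycle_sum f (rev (map h l)) = cycle_sum (\<lambda>a b. f (h b) (h a)) l"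
  by (cases "l = []")
    (auto simp: cycle_sum_eq path_sum_rev path_sum_map last_rev hd_rev hd_map last_map)

lemma path_sum_length_source:
  "l \<noteq> [] \<Longrightarrow> path_sum (\<lambda>a b. length a) l + length (last l) = sum_list (map length l)"
  by (induction l rule: induct_list012) auto

lemma path_sum_length_target:
  "l \<noteq> [] \<Longrightarrow> path_sum (\<lambda>a b. length b) l + length (hd l) = sum_list (map length l)"
  by (induction l rule: induct_list012) auto

lemma path_sum_dst_ov: "path_sum dst l + path_sum ov l = path_sum (\<lambda>a b. length a) l"
  using path_sum_add[of dst ov l] by (simp add: dst_add_ov)

lemma cycle_sum_dst_ov: "cycle_sum dst l + cycle_sum ov l = sum_list (map length l)"
proof (cases "l = []")
  case False
  have "cycle_sum dst l + cycle_sum ov l =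
      path_sum dst l + path_sum ov l + (dst (last l) (hd l) + ov (last l) (hd l))"
    using False by (simp add: cycle_sum_eq)
  also have "\<dots> = sum_list (map length l)"
    using path_sum_length_source[OF False] by (simp add: path_sum_dst_ov dst_add_ov)
  finally show ?thesis .
qed simp

lemma path_sum_conv_sum: "path_sum f l = (\<Sum>i<length l - 1. f (l ! i) (l ! Suc i))"
proof (induction f l rule: path_sum.induct)
  case (1 f a b l)
  have "(\<Sum>i<length (a # b # l) - 1. f ((a # b # l) ! i) ((a # b # l) ! Suc i))
      = f a b + (\<Sum>i<length (b # l) - 1. f ((b # l) ! i) ((b # l) ! Suc i))"
    by (simp add: sum.lessThan_Suc_shift del: sum.lessThan_Suc)
  then show ?case using 1 by simp
qed auto

lemma cyc_weight_eq_cycle_sum: "cyc_weight zs = cycle_sum dst zs"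
proof (cases "zs = []")
  case True then show ?thesis by (simp add: cyc_weight_def)
next
  case False
  obtain m where m: "length zs = Suc m" using False by (cases zs) auto
  have "cyc_weight zs = (\<Sum>i<Suc m. dst (zs ! i) (zs ! ((i + 1) mod Suc m)))"
    by (simp add: cyc_weight_def m)
  also have "\<dots> = (\<Sum>i<m. dst (zs ! i) (zs ! Suc i)) + dst (zs ! m) (zs ! 0)"
    by (simp add: sum.lessThan_Suc del: mod_Suc)
  also have "\<dots> = cycle_sum dst zs"
    using False m by (simp add: cycle_sum_eq path_sum_conv_sum last_conv_nth hd_conv_nth)
  finally show ?thesis .
qed

lemma cyc_weight_rotate: "cyc_weight (rotate n zs) = cyc_weight zs"
  by (simp add: cyc_weight_eq_cycle_sum cycle_sum_rotate)

lemma length_pref_dst: "length (pref x y) = dst x y"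
  by (simp add: pref_def dst_def ov_le_length_left)

lemma length_mrg: "l \<noteq> [] \<Longrightarrow> length (mrg l) = path_sum dst l + length (last l)"
  by (induction l rule: mrg.induct) (auto simp: length_pref_dst)

lemma prefix_mrg: "prefix x (mrg (x # l))"
proof (induction l arbitrary: x)
  case Nil then show ?case by simp
next
  case (Cons y zs)
  have "x = pref x y @ take (ov x y) y"
    using ov_drop_eq_take[of x y] by (simp add: pref_def) (metis append_take_drop_id)
  moreover have "prefix (take (ov x y) y) (mrg (y # zs))"
    using Cons.IH[of y] by (meson prefix_order.trans take_is_prefix)
  ultimately show ?case by (metis mrg.simps(3) same_prefix_prefix)
qed

lemma suffix_mrg: "l \<noteq> [] \<Longrightarrow> suffix (last l) (mrg l)"
  by (induction l rule: mrg.induct) (auto simp: suffix_def)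

lemma sublist_mrg: "x \<in> set l \<Longrightarrow> sublist x (mrg l)"
proof (induction l rule: mrg.induct)
  case (3 a b zs)
  show ?case
  proof (cases "x = a")
    case True
    then show ?thesis using prefix_mrg[of a "b # zs"] by (simp add: prefix_imp_sublist)
  next
    case False
    then have "sublist x (mrg (b # zs))" using 3 by simp
    then show ?thesis by (metis mrg.simps(3) sublist_append_leftI sublist_order.order.trans)
  qed
qed simp_all

text \<open>For the sequence \<open>zs = [z\<^sub>1,\<dots>,z\<^sub>r]\<close> of a cycle, \<open>mrg (z\<^sub>r # zs)\<close> is the string
  \<open>\<langle>z\<^sub>r,z\<^sub>1,\<dots>,z\<^sub>r\<rangle>\<close> obtained by going once around the cycle.\<close>

lemma mrg_around_cycle:
  assumes "zs \<noteq> []"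
  shows "length (mrg (last zs # zs)) = cyc_weight zs + length (last zs)"
    and "prefix (last zs) (mrg (last zs # zs))"
    and "suffix (last zs) (mrg (last zs # zs))"
proof -
  have "length (mrg (last zs # zs)) = dst (last zs) (hd zs) + path_sum dst zs + length (last zs)"
    using length_mrg[of "last zs # zs"] path_sum_append[of "[last zs]" zs dst] assms by simp
  also have "dst (last zs) (hd zs) + path_sum dst zs = cyc_weight zs"
    using assms by (simp add: cyc_weight_eq_cycle_sum cycle_sum_eq)
  finally show "length (mrg (last zs # zs)) = cyc_weight zs + length (last zs)" .
  show "prefix (last zs) (mrg (last zs # zs))" by (rule prefix_mrg)
  show "suffix (last zs) (mrg (last zs # zs))" using suffix_mrg[of "last zs # zs"] assms by simp
qed

lemma last_rotate: "1 \<le> j \<Longrightarrow> j \<le> length zs \<Longrightarrow> last (rotate j zs) = zs ! (j - 1)"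
proof -
  assume j: "1 \<le> j" "j \<le> length zs"
  show ?thesis
  proof (cases "j = length zs")
    case True
    moreover have "zs \<noteq> []" using j by auto
    ultimately show ?thesis by (simp add: last_conv_nth)
  next
    case False
    then have "rotate j zs = drop j zs @ take j zs" using j by (simp add: rotate_drop_take)
    moreover have "take j zs \<noteq> []" using j by (cases zs) auto
    ultimately have "last (rotate j zs) = last (take j zs)" by simp
    also have "\<dots> = take j zs ! (length (take j zs) - 1)"
      using \<open>take j zs \<noteq> []\<close> by (rule last_conv_nth)
    also have "\<dots> = zs ! (j - 1)" using j by simp
    finally show ?thesis .
  qed
qed

section \<open>Invariants of the current strings\<close>

lemma fst_rcI [simp]: "fst (rcI u) = rc (fst u)"
  by (simp add: rcI_def)

lemma snd_rcI [simp]: "snd (rcI u) = rev (map rc (snd u))"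
  by (simp add: rcI_def)

lemma rcI_rcI [simp]: "rcI (rcI u) = u"
  by (simp add: rcI_def rev_map comp_def)

lemma rcI_inject [simp]: "rcI u = rcI v \<longleftrightarrow> u = v"
  by (metis rcI_rcI)

lemma hd_snd_rcI: "snd u \<noteq> [] \<Longrightarrow> hd (snd (rcI u)) = rc (last (snd u))"
  by (simp add: hd_rev last_map)

lemma last_snd_rcI: "snd u \<noteq> [] \<Longrightarrow> last (snd (rcI u)) = rc (hd (snd u))"
  by (simp add: last_rev hd_map)

lemma items_iff: "u \<in> items P \<longleftrightarrow> u \<in> P \<or> rcI u \<in> P"
  by (auto simp: items_def image_iff) (metis rcI_rcI)

lemma items_rcI: "u \<in> items P \<Longrightarrow> rcI u \<in> items P"
  unfolding items_iff rcI_rcI by blast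

lemma items_mono: "P \<subseteq> Q \<Longrightarrow> items P \<subseteq> items Q"
  by (auto simp: items_iff)

lemma items_insert: "items (insert Z Q) = insert Z (insert (rcI Z) (items Q))"
  by (auto simp: items_iff)

lemma items_diff:
  assumes "\<And>d. d \<in> D \<Longrightarrow> rcI d \<in> D"
  shows "items (P - D) = items P - D"
proof (rule set_eqI)
  fix u show "u \<in> items (P - D) \<longleftrightarrow> u \<in> items P - D"
    using assms[of "rcI u"] assms[of u] unfolding Diff_iff items_iff rcI_rcI by blast
qed

lemma items_diff2: "items (P - {x, rcI x}) = items P - {x, rcI x}"
  by (rule items_diff) auto

lemma items_diff4: "items (P - {x, rcI x, y, rcI y}) = items P - {x, rcI x, y, rcI y}"
  by (rule items_diff) auto

lemma allowed_rcI: "allowed P x y \<Longrightarrow> allowed P (rcI y) (rcI x)"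
  by (auto simp: allowed_def items_rcI)

lemma greedy_max_rcI: "greedy_max P x y \<Longrightarrow> greedy_max P (rcI y) (rcI x)"
  unfolding greedy_max_def using allowed_rcI by simp

lemma greedy_max_items: "greedy_max P x y \<Longrightarrow> x \<in> items P \<and> y \<in> items P"
  by (simp add: greedy_max_def allowed_def)

lemma greedy_max_not_rcI: "greedy_max P x y \<Longrightarrow> x \<noteq> y \<Longrightarrow> y \<noteq> rcI x"
  by (auto simp: greedy_max_def allowed_def)

definition join_item :: "item \<Rightarrow> item \<Rightarrow> item" where
  "join_item x y = (mrg2 (fst x) (fst y), snd x @ snd y)"

lemma rcI_join_item: "rcI (join_item x y) = join_item (rcI y) (rcI x)"
  by (simp add: join_item_def rcI_def rc_mrg2)

text \<open>Overlaps measured at the boundary vertices of the sequences; \<open>state_inv\<close> makes them agree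
  with the overlaps of the current strings themselves (\<open>link_ov_eq_ov\<close>).\<close>

definition link_ov :: "item \<Rightarrow> item \<Rightarrow> nat" where
  "link_ov u v = ov (last (snd u)) (hd (snd v))"

lemma link_ov_rcI: "snd u \<noteq> [] \<Longrightarrow> snd v \<noteq> [] \<Longrightarrow> link_ov (rcI v) (rcI u) = link_ov u v"
  by (simp add: link_ov_def hd_snd_rcI last_snd_rcI del: snd_rcI)

definition item_ok :: "dna set \<Rightarrow> item \<Rightarrow> bool" where
  "item_ok S u \<longleftrightarrow> snd u \<noteq> [] \<and> prefix (hd (snd u)) (fst u) \<and> suffix (last (snd u)) (fst u) \<and>
     set (snd u) \<subseteq> vertices S \<and> distinct (snd u) \<and>
     (\<forall>v\<in>set (snd u). rc v \<in> set (snd u) \<longrightarrow> rc v = v)"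

definition apart :: "item \<Rightarrow> item \<Rightarrow> bool" where
  "apart u v \<longleftrightarrow> \<not> sublist (fst u) (fst v) \<and> set (snd u) \<inter> set (snd v) = {}"

definition ov_at_ends :: "item \<Rightarrow> item \<Rightarrow> bool" where
  "ov_at_ends u v \<longleftrightarrow> (ov (fst u) (fst v) \<noteq> 0 \<longrightarrow>
     ov (fst u) (fst v) < length (last (snd u)) \<and> ov (fst u) (fst v) < length (hd (snd v)))"

definition state_inv :: "dna set \<Rightarrow> item set \<Rightarrow> bool" where
  "state_inv S P \<longleftrightarrow> (\<forall>u\<in>items P. item_ok S u) \<and>
     (\<forall>u\<in>items P. \<forall>v\<in>items P. v \<noteq> u \<and> v \<noteq> rcI u \<longrightarrow> apart u v) \<and>
     (\<forall>u\<in>items P. \<forall>v\<in>items P. (v = u \<or> v \<noteq> rcI u) \<longrightarrow> ov_at_ends u v)"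

lemma state_inv_ok: "state_inv S P \<Longrightarrow> u \<in> items P \<Longrightarrow> item_ok S u"
  by (simp add: state_inv_def)

lemma state_inv_snd: "state_inv S P \<Longrightarrow> u \<in> items P \<Longrightarrow> snd u \<noteq> []"
  by (simp add: state_inv_def item_ok_def)

lemma state_inv_apart:
  "state_inv S P \<Longrightarrow> u \<in> items P \<Longrightarrow> v \<in> items P \<Longrightarrow> v \<noteq> u \<Longrightarrow> v \<noteq> rcI u \<Longrightarrow> apart u v"
  by (simp add: state_inv_def)

lemma state_inv_ov:
  "state_inv S P \<Longrightarrow> u \<in> items P \<Longrightarrow> v \<in> items P \<Longrightarrow> v = u \<or> v \<noteq> rcI u \<Longrightarrow> ov_at_ends u v"
  unfolding state_inv_def by blast

lemma state_inv_mono: "state_inv S P \<Longrightarrow> Q \<subseteq> P \<Longrightarrow> state_inv S Q"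
  unfolding state_inv_def using items_mono[of Q P] by blast

lemma link_ov_eq_ov: "state_inv S P \<Longrightarrow> allowed P u v \<Longrightarrow> link_ov u v = ov (fst u) (fst v)"
proof -
  assume i: "state_inv S P" and a: "allowed P u v"
  have uv: "u \<in> items P" "v \<in> items P" "v = u \<or> v \<noteq> rcI u" using a by (auto simp: allowed_def)
  have "item_ok S u" "item_ok S v" using i uv state_inv_ok by auto
  moreover have "ov_at_ends u v" using state_inv_ov[OF i uv] .
  ultimately show ?thesis unfolding link_ov_def item_ok_def ov_at_ends_def
    by (intro ov_eq_of_suffix_prefix) auto
qed

lemma link_ov_le_greedy:
  "state_inv S P \<Longrightarrow> greedy_max P x y \<Longrightarrow> allowed P u v \<Longrightarrow> link_ov u v \<le> link_ov x y"
proof -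
  assume i: "state_inv S P" and g: "greedy_max P x y" and a: "allowed P u v"
  have "ov (fst u) (fst v) \<le> ov (fst x) (fst y)" using g a unfolding greedy_max_def by blast
  then show ?thesis using link_ov_eq_ov[OF i a] link_ov_eq_ov[OF i, of x y] g
    by (simp add: greedy_max_def)
qed

lemma greedy_pair_apart:
  assumes i: "state_inv S P" and g: "greedy_max P x y" and xy: "x \<noteq> y"
  shows "apart x y" "apart y x" "apart x (rcI y)" "apart y (rcI x)"
proof -
  have xI: "x \<in> items P" and yI: "y \<in> items P" using greedy_max_items[OF g] by auto
  have yx: "y \<noteq> rcI x" and xy': "x \<noteq> rcI y" using greedy_max_not_rcI[OF g xy] by auto
  show "apart x y" using state_inv_apart[OF i xI yI] xy yx by auto
  show "apart y x" using state_inv_apart[OF i yI xI] xy xy' by auto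
  show "apart x (rcI y)" using state_inv_apart[OF i xI items_rcI[OF yI]] xy yx by (metis rcI_rcI)
  show "apart y (rcI x)" using state_inv_apart[OF i yI items_rcI[OF xI]] xy xy' by (metis rcI_rcI)
qed

lemma item_ok_join:
  assumes i: "state_inv S P" and g: "greedy_max P x y" and xy: "x \<noteq> y"
  shows "item_ok S (join_item x y)"
proof -
  have gx: "item_ok S x" and gy: "item_ok S y"
    using greedy_max_items[OF g] state_inv_ok[OF i] by auto
  have sZ: "snd (join_item x y) = snd x @ snd y" by (simp add: join_item_def)
  have nex: "snd x \<noteq> []" and ney: "snd y \<noteq> []" using gx gy by (auto simp: item_ok_def)
  note sep = greedy_pair_apart[OF i g xy]
  have no_rc_across: "\<not> (v \<in> set (snd x) \<and> rc v \<in> set (snd y))"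
    "\<not> (v \<in> set (snd y) \<and> rc v \<in> set (snd x))" for v
   
      using sep(3,4) unfolding apart_def snd_rcI set_rev set_map
      by (metis IntI empty_iff imageI rc_rc)+
  show ?thesis
    unfolding item_ok_def
  proof (intro conjI)
    show "snd (join_item x y) \<noteq> []" using sZ nex by simp
    show "prefix (hd (snd (join_item x y))) (fst (join_item x y))"
     
        using gx prefix_mrg2 nex unfolding item_ok_def join_item_def
        by (metis hd_append2 prefix_order.trans snd_conv fst_conv)
    show "suffix (last (snd (join_item x y))) (fst (join_item x y))"
     
        using gy suffix_mrg2 ney unfolding item_ok_def join_item_def
        by (metis last_appendR suffix_order.trans snd_conv fst_conv)
    show "set (snd (join_item x y)) \<subseteq> vertices S" using gx gy sZ by (auto simp: item_ok_def)
    show "distinct (snd (join_item x y))"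
      using gx gy sZ sep(1) by (auto simp: item_ok_def apart_def)
    show "\<forall>v\<in>set (snd (join_item x y)). rc v \<in> set (snd (join_item x y)) \<longrightarrow> rc v = v"
      using gx gy sZ no_rc_across by (auto simp: item_ok_def)
  qed
qed

text \<open>The greedy choice excludes the self-overlaps that would otherwise make the joined string
  overlap itself beyond its end vertices.\<close>

lemma ov_at_ends_join_self:
  assumes i: "state_inv S P" and g: "greedy_max P x y" and xy: "x \<noteq> y"
  shows "ov_at_ends (join_item x y) (join_item x y)"
proof -
  have xI: "x \<in> items P" and yI: "y \<in> items P" using greedy_max_items[OF g] by auto
  have "x \<noteq> rcI y" using greedy_max_not_rcI[OF g xy] by auto
  then have oyx: "ov_at_ends y x" using state_inv_ov[OF i yI xI] by auto
  have nex: "snd x \<noteq> []" and ney: "snd y \<noteq> []" using state_inv_snd[OF i] xI yI by auto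
  have "allowed P x x" using xI by (auto simp: allowed_def)
  then have gxx: "ov (fst x) (fst x) \<le> ov (fst x) (fst y)" using g unfolding greedy_max_def by blast
  have "ov (mrg2 (fst x) (fst y)) (mrg2 (fst x) (fst y)) \<le> ov (fst y) (fst x)"
    using ov_mrg2_self[of "fst x" "fst y"] greedy_pair_apart[OF i g xy] gxx
      by (auto simp: apart_def)
  then show ?thesis using oyx nex ney by (auto simp: ov_at_ends_def join_item_def)
qed

lemma join_item_apart_ov:
  assumes i: "state_inv S P" and g: "greedy_max P x y"
    and W: "W \<in> items P" "W \<notin> {x, rcI x, y, rcI y}"
  shows "apart (join_item x y) W \<and> apart W (join_item x y) \<and>
    ov_at_ends (join_item x y) W \<and> ov_at_ends W (join_item x y)"
proof -
  have xI: "x \<in> items P" and yI: "y \<in> items P" using greedy_max_items[OF g] by auto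
  define X where "X = fst x"
  define Y where "Y = fst y"
  define Z where "Z = mrg2 X Y"
  have fZ: "fst (join_item x y) = Z" and sZ: "snd (join_item x y) = snd x @ snd y"
    by (simp_all add: join_item_def Z_def X_def Y_def)
  have nex: "snd x \<noteq> []" and ney: "snd y \<noteq> []" using state_inv_snd[OF i] xI yI by auto
  have pXZ: "prefix X Z" and sYZ: "suffix Y Z" by (simp_all add: Z_def prefix_mrg2 suffix_mrg2)
  have sxW: "apart x W" and sWx: "apart W x" and syW: "apart y W" and sWy: "apart W y"
    using state_inv_apart[OF i xI W(1)] state_inv_apart[OF i W(1) xI]
      state_inv_apart[OF i yI W(1)] state_inv_apart[OF i W(1) yI] W(2)
    by (metis insertCI rcI_rcI)+
  have oyW: "ov_at_ends y W" and oWx: "ov_at_ends W x"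
    using state_inv_ov[OF i yI W(1)] state_inv_ov[OF i W(1) xI] W(2) by (metis insertCI rcI_rcI)+
  have "allowed P x W" using W xI by (auto simp: allowed_def)
  then have gxW: "ov X (fst W) \<le> ov X Y" using g unfolding greedy_max_def X_def Y_def by blast
  have nsZW: "\<not> sublist Z (fst W)"
  proof
    assume "sublist Z (fst W)"
    then have "sublist X (fst W)" using pXZ by (meson prefix_imp_sublist sublist_order.order.trans)
    then show False using sxW by (simp add: apart_def X_def)
  qed
  have nsWZ: "\<not> sublist (fst W) Z"
  proof
    assume "sublist (fst W) Z"
    from sublist_mrg2[OF this[unfolded Z_def]] show False
      using sWx sWy sxW gxW by (auto simp: apart_def X_def Y_def)
  qed
  have "ov Z (fst W) \<le> ov Y (fst W)"
    using ov_suffix_mono[OF sYZ, of "fst W"] syW by (auto simp: apart_def Y_def)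
  then have oZW: "ov_at_ends (join_item x y) W"
    using oyW ney fZ sZ by (auto simp: ov_at_ends_def Y_def)
  have "ov (fst W) Z \<le> ov (fst W) X"
    using ov_prefix_mono[OF pXZ, of "fst W"] sxW by (auto simp: apart_def X_def)
  then have oWZ: "ov_at_ends W (join_item x y)"
    using oWx nex fZ sZ by (auto simp: ov_at_ends_def X_def)
  show ?thesis using nsZW nsWZ oZW oWZ sxW syW sWx sWy fZ sZ by (auto simp: apart_def)
qed

lemma state_inv_join:
  assumes i: "state_inv S P" and g: "greedy_max P x y" and xy: "x \<noteq> y"
  shows "state_inv S (insert (join_item x y) (P - {x, rcI x, y, rcI y}))"
proof -
  define Z where "Z = join_item x y"
  define R where "R = items P - {x, rcI x, y, rcI y}"
  have it: "items (insert Z (P - {x, rcI x, y, rcI y})) = insert Z (insert (rcI Z) R)"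
    by (simp add: items_insert items_diff4 R_def)
  have g': "greedy_max P (rcI y) (rcI x)" using greedy_max_rcI[OF g] .
  have xy': "rcI y \<noteq> rcI x" using xy by simp
  have R': "R = items P - {rcI y, rcI (rcI y), rcI x, rcI (rcI x)}" by (auto simp: R_def)
  have c1: "\<And>W. W \<in> R \<Longrightarrow> apart Z W \<and> apart W Z \<and> ov_at_ends Z W \<and> ov_at_ends W Z"
    using join_item_apart_ov[OF i g] by (auto simp: R_def Z_def)
  have c2: "\<And>W. W \<in> R \<Longrightarrow>
      apart (rcI Z) W \<and> apart W (rcI Z) \<and> ov_at_ends (rcI Z) W \<and> ov_at_ends W (rcI Z)"
    using join_item_apart_ov[OF i g'] unfolding R' by (auto simp: Z_def rcI_join_item)
  have gZ: "item_ok S Z" "item_ok S (rcI Z)" "ov_at_ends Z Z" "ov_at_ends (rcI Z) (rcI Z)"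
    using item_ok_join[OF i g xy] item_ok_join[OF i g' xy']
      ov_at_ends_join_self[OF i g xy] ov_at_ends_join_self[OF i g' xy']
    by (auto simp: Z_def rcI_join_item)
  have RP: "R \<subseteq> items P" by (auto simp: R_def)
  show ?thesis unfolding state_inv_def Z_def[symmetric] it
  proof (intro conjI ballI impI)
    fix u assume "u \<in> insert Z (insert (rcI Z) R)"
    then show "item_ok S u" using gZ RP state_inv_ok[OF i] by blast
  next
    fix u v assume u: "u \<in> insert Z (insert (rcI Z) R)" and v: "v \<in> insert Z (insert (rcI Z) R)"
      and uv: "v \<noteq> u \<and> v \<noteq> rcI u"
    from u v show "apart u v"
    proof (elim insertE)
      assume "u \<in> R" "v \<in> R" then show ?thesis using uv RP state_inv_apart[OF i] by blast
    qed (use uv c1 c2 in auto)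
  next
    fix u v assume u: "u \<in> insert Z (insert (rcI Z) R)" and v: "v \<in> insert Z (insert (rcI Z) R)"
      and uv: "v = u \<or> v \<noteq> rcI u"
    from u v show "ov_at_ends u v"
    proof (elim insertE)
      assume "u \<in> R" "v \<in> R" then show ?thesis using uv RP state_inv_ov[OF i] by blast
    qed (use uv c1 c2 gZ in auto)
  qed
qed

section \<open>Cycle covers of the current strings\<close>

definition seq_len :: "item \<Rightarrow> nat" where
  "seq_len u = path_sum dst (snd u) + length (last (snd u))"

lemma seq_len_rcI: "seq_len (rcI u) = seq_len u"
proof (cases "snd u = []")
  case True then show ?thesis by (simp add: seq_len_def)
next
  case False
  define l where "l = snd u"
  have ne: "l \<noteq> []" using False by (simp add: l_def)
  have "path_sum dst (rev (map rc l)) = path_sum (\<lambda>a b. dst (rc b) (rc a)) l"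
    by (simp add: path_sum_rev path_sum_map)
  also have "\<dots> = path_sum (\<lambda>a b. length b - ov a b) l" by (simp add: dst_def)
  finally have e1: "path_sum dst (rev (map rc l)) = path_sum (\<lambda>a b. length b - ov a b) l" .
  have e2: "path_sum (\<lambda>a b. length b - ov a b) l + path_sum ov l = path_sum (\<lambda>a b. length b) l"
    using path_sum_add[of "\<lambda>a b. length b - ov a b" ov l] by (simp add: ov_le_length_right)
  have "seq_len (rcI u) + path_sum ov l = path_sum (\<lambda>a b. length b) l + length (hd l)"
    using e1 e2 ne by (simp add: seq_len_def l_def last_rev hd_map)
  also have "\<dots> = sum_list (map length l)" using path_sum_length_target[OF ne] .
  also have "\<dots> = seq_len u + path_sum ov l"
    using path_sum_length_source[OF ne] path_sum_dst_ov[of l] by (simp add: seq_len_def l_def)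
  finally show ?thesis by simp
qed

lemma sum_seq_len_flip: "sum_list (map seq_len (rev (map rcI l))) = sum_list (map seq_len l)"
  by (simp add: rev_map[symmetric] seq_len_rcI comp_def)

lemma path_sum_link_ov_flip:
  "(\<And>u. u \<in> set l \<Longrightarrow> snd u \<noteq> []) \<Longrightarrow> path_sum link_ov (rev (map rcI l)) = path_sum link_ov l"
  by (simp add: path_sum_rev path_sum_map link_ov_rcI cong: path_sum_cong)

lemma cycle_sum_link_ov_flip:
  "(\<And>u. u \<in> set l \<Longrightarrow> snd u \<noteq> []) \<Longrightarrow> cycle_sum link_ov (rev (map rcI l)) = cycle_sum link_ov l"
  by (simp add: cycle_sum_rev_map link_ov_rcI cong: cycle_sum_cong)

lemma seq_len_join:
  "snd x \<noteq> [] \<Longrightarrow> snd y \<noteq> [] \<Longrightarrow> seq_len (join_item x y) + link_ov x y = seq_len x + seq_len y"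
  by (simp add: seq_len_def join_item_def link_ov_def path_sum_append)
    (metis add.assoc add.commute dst_add_ov)

lemma seq_len_close: "snd x \<noteq> [] \<Longrightarrow> cyc_weight (snd x) + link_ov x x = seq_len x"
  by (simp add: cyc_weight_eq_cycle_sum cycle_sum_eq seq_len_def link_ov_def)
    (metis add.assoc dst_add_ov)

text \<open>A cover \<open>U\<close> of the current strings \<open>P\<close> is a list of cycles through one orientation of
  each string. Expanding every string into its vertex sequence turns \<open>U\<close> into cycles of
  \<open>G\<^sub>S\<close> of total weight \<open>cover_len U - cover_ov U\<close>, so \<open>better_cover P U U'\<close> says that \<open>U'\<close> is a
  cover that weighs at most as much as \<open>U\<close>.\<close>

definition one_orientation :: "item set \<Rightarrow> item set \<Rightarrow> bool" where
  "one_orientation P Q \<longleftrightarrow> Q \<subseteq> items P \<and> (\<forall>p\<in>P. p \<in> Q \<or> rcI p \<in> Q) \<and>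
     (\<forall>u\<in>Q. rcI u \<in> Q \<longrightarrow> rcI u = u)"

definition item_cover :: "item set \<Rightarrow> item list list \<Rightarrow> bool" where
  "item_cover P U \<longleftrightarrow> (\<forall>A\<in>set U. A \<noteq> []) \<and> distinct (concat U) \<and>
     one_orientation P (set (concat U))"

definition cover_len :: "item list list \<Rightarrow> nat" where
  "cover_len U = sum_list (map seq_len (concat U))"

definition cover_ov :: "item list list \<Rightarrow> nat" where
  "cover_ov U = sum_list (map (cycle_sum link_ov) U)"

definition better_cover :: "item set \<Rightarrow> item list list \<Rightarrow> item list list \<Rightarrow> bool" where
  "better_cover P U U' \<longleftrightarrow> item_cover P U' \<and> cover_len U' = cover_len U \<and> cover_ov U \<le> cover_ov U'"

lemma cover_len_Nil [simp]: "cover_len [] = 0"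
  by (simp add: cover_len_def)

lemma cover_len_Cons [simp]: "cover_len (A # U) = sum_list (map seq_len A) + cover_len U"
  by (simp add: cover_len_def)

lemma cover_ov_Nil [simp]: "cover_ov [] = 0"
  by (simp add: cover_ov_def)

lemma cover_ov_Cons [simp]: "cover_ov (A # U) = cycle_sum link_ov A + cover_ov U"
  by (simp add: cover_ov_def)

lemma better_cover_refl: "item_cover P U \<Longrightarrow> better_cover P U U"
  by (simp add: better_cover_def)

lemma better_cover_trans: "better_cover P U1 U2 \<Longrightarrow> better_cover P U2 U3 \<Longrightarrow> better_cover P U1 U3"
  by (auto simp: better_cover_def)

lemma better_cover_item_cover: "better_cover P U U' \<Longrightarrow> item_cover P U'"
  by (simp add: better_cover_def)

lemma one_orientation_palindrome: "one_orientation P Q \<Longrightarrow> u \<in> Q \<Longrightarrow> rcI u \<in> Q \<Longrightarrow> rcI u = u"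
  by (simp add: one_orientation_def)

lemma item_cover_items: "item_cover P U \<Longrightarrow> u \<in> set (concat U) \<Longrightarrow> u \<in> items P"
  by (auto simp: item_cover_def one_orientation_def)

lemma item_cover_snd: "state_inv S P \<Longrightarrow> item_cover P U \<Longrightarrow> u \<in> set (concat U) \<Longrightarrow> snd u \<noteq> []"
  using item_cover_items state_inv_snd by blast

lemma item_cover_orientation:
  "item_cover P U \<Longrightarrow> u \<in> items P \<Longrightarrow> u \<in> set (concat U) \<or> rcI u \<in> set (concat U)"
  unfolding item_cover_def one_orientation_def items_iff by (metis rcI_rcI)

lemma item_cover_allowed:
  assumes w: "item_cover P U" and u: "u \<in> set (concat U)" and v: "v \<in> set (concat U)"
  shows "allowed P u v"
proof -
  have g: "one_orientation P (set (concat U))" using w by (simp add: item_cover_def)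
  then have "u \<in> items P" "v \<in> items P" using u v by (auto simp: one_orientation_def)
  moreover have "rcI u = v \<longrightarrow> rcI u = u" using one_orientation_palindrome[OF g u] v by blast
  ultimately show ?thesis unfolding allowed_def by auto
qed

lemma item_cover_link_ov_le:
  assumes "state_inv S P" "greedy_max P x y" "item_cover P U"
    and "u \<in> set (concat U)" "v \<in> set (concat U)"
  shows "link_ov u v \<le> link_ov x y"
  using link_ov_le_greedy[OF assms(1,2) item_cover_allowed[OF assms(3-5)]] .

lemma link_ov_monge:
  "link_ov a d \<le> link_ov a b \<Longrightarrow> link_ov c b \<le> link_ov a b \<Longrightarrow>
    link_ov a d + link_ov c b \<le> link_ov a b + link_ov c d"
  unfolding link_ov_def by (rule ov_monge)

lemma sum_list_map_mset:
  fixes f :: "'a \<Rightarrow> 'b::comm_monoid_add"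
  assumes "mset xs = mset ys"
  shows "sum_list (map f xs) = sum_list (map f ys)"
proof -
  have "sum_list (map f xs) = sum_mset (mset (map f xs))" by (rule sum_mset_sum_list[symmetric])
  also have "\<dots> = sum_mset (mset (map f ys))" using assms by simp
  also have "\<dots> = sum_list (map f ys)" by (rule sum_mset_sum_list)
  finally show ?thesis .
qed

lemma item_cover_mset:
  assumes "item_cover P U" "\<forall>A\<in>set U'. A \<noteq> []" "mset (concat U') = mset (concat U)"
  shows "item_cover P U'"
proof -
  have "set (concat U') = set (concat U)" using assms(3) by (metis mset_eq_setD)
  moreover have "distinct (concat U')"
    using assms(1) mset_eq_imp_distinct_iff[OF assms(3)] by (simp add: item_cover_def)
  ultimately show ?thesis using assms by (simp add: item_cover_def)
qed

lemma cover_len_mset: "mset (concat U') = mset (concat U) \<Longrightarrow> cover_len U' = cover_len U"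
  unfolding cover_len_def by (rule sum_list_map_mset)

lemma better_cover_mset:
  assumes "item_cover P U" "\<forall>A\<in>set U'. A \<noteq> []" "mset (concat U') = mset (concat U)"
    and "cover_ov U \<le> cover_ov U'"
  shows "better_cover P U U'"
  using item_cover_mset[OF assms(1-3)] cover_len_mset[OF assms(3)] assms(4)
  by (simp add: better_cover_def)

lemma better_cover_perm: "item_cover P U \<Longrightarrow> mset U' = mset U \<Longrightarrow> better_cover P U U'"
proof -
  assume w: "item_cover P U" and m: "mset U' = mset U"
  have mc: "mset (concat U') = mset (concat U)"
    unfolding mset_concat using sum_list_map_mset[OF m, of mset] .
  have ne: "\<forall>A\<in>set U'. A \<noteq> []" using w m by (auto simp: item_cover_def dest: mset_eq_setD)
  have "cover_ov U' = cover_ov U" unfolding cover_ov_def by (rule sum_list_map_mset[OF m])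
  then show ?thesis using better_cover_mset[OF w ne mc] by simp
qed

lemma better_cover_rotate:
  "item_cover P ((l1 @ l2) # rest) \<Longrightarrow> better_cover P ((l1 @ l2) # rest) ((l2 @ l1) # rest)"
  by (rule better_cover_mset) (auto simp: item_cover_def cycle_sum_swap[of link_ov l2 l1])

lemma one_orientation_flip:
  assumes g: "one_orientation P (A \<union> C)" and d: "A \<inter> C = {}"
  shows "one_orientation P (rcI ` A \<union> C)"
proof -
  have pal: "\<And>u. u \<in> A \<union> C \<Longrightarrow> rcI u \<in> A \<union> C \<Longrightarrow> rcI u = u"
    using one_orientation_palindrome[OF g] .
  have sub: "rcI ` A \<union> C \<subseteq> items P" using g by (auto simp: one_orientation_def items_rcI)
  have cov: "\<forall>p\<in>P. p \<in> rcI ` A \<union> C \<or> rcI p \<in> rcI ` A \<union> C"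
  proof
    fix p assume "p \<in> P"
    then have "p \<in> A \<union> C \<or> rcI p \<in> A \<union> C" using g by (simp add: one_orientation_def)
    then show "p \<in> rcI ` A \<union> C \<or> rcI p \<in> rcI ` A \<union> C"
      by (auto simp: image_iff) (metis rcI_rcI)+
  qed
  have "rcI u = u" if u: "u \<in> rcI ` A \<union> C" and ru: "rcI u \<in> rcI ` A \<union> C" for u
  proof (cases "u \<in> C")
    case True
    then have "rcI u \<notin> rcI ` A" using d by auto
    then show ?thesis using pal[of u] True ru by auto
  next
    case False
    then obtain a where a: "a \<in> A" "u = rcI a" using u by auto
    then have "a \<in> rcI ` A" using ru d by auto
    then show ?thesis using pal[of a] a by auto
  qed
  then show ?thesis using sub cov by (simp add: one_orientation_def)
qed

lemma item_cover_flip_segment: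
  assumes w: "item_cover P ((A @ B) # rest)"
  shows "item_cover P ((rev (map rcI A) @ B) # rest)"
proof -
  let ?C = "set B \<union> set (concat rest)"
  have d: "distinct A" "distinct (B @ concat rest)" "set A \<inter> ?C = {}"
    using w by (auto simp: item_cover_def)
  have g: "one_orientation P (set A \<union> ?C)" using w by (simp add: item_cover_def Un_assoc)
  have "rcI a \<notin> ?C" if a: "a \<in> set A" for a
  proof
    assume ra: "rcI a \<in> ?C"
    then have "rcI a = a" using one_orientation_palindrome[OF g, of a] a by auto
    then show False using a ra d(3) by auto
  qed
  then have "distinct (rev (map rcI A) @ B @ concat rest)"
    using d by (auto simp: distinct_map inj_on_def)
  moreover have "one_orientation P (rcI ` set A \<union> ?C)" using one_orientation_flip[OF g d(3)] .
  ultimately show ?thesis using w by (auto simp: item_cover_def Un_assoc)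
qed

lemma better_cover_flip:
  assumes i: "state_inv S P" and w: "item_cover P (A # rest)"
  shows "better_cover P (A # rest) (rev (map rcI A) # rest)"
proof -
  have "item_cover P (rev (map rcI A) # rest)"
    using item_cover_flip_segment[of P A "[]" rest] w by simp
  moreover have "cycle_sum link_ov (rev (map rcI A)) = cycle_sum link_ov A"
    using item_cover_snd[OF i w] by (intro cycle_sum_link_ov_flip) auto
  ultimately show ?thesis by (simp add: better_cover_def sum_seq_len_flip)
qed

lemma better_cover_split:
  assumes w: "item_cover P ((x # R1 @ y # R2) # rest)" and R1: "R1 \<noteq> []"
    and mg: "link_ov x (hd R1) + link_ov (last R1) y \<le> link_ov x y + link_ov (last R1) (hd R1)"
  shows "better_cover P ((x # R1 @ y # R2) # rest) ((x # y # R2) # R1 # rest)"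
proof (rule better_cover_mset[OF w])
  have "cycle_sum link_ov (x # R1 @ y # R2) = link_ov x (hd R1) + path_sum link_ov R1 +
      link_ov (last R1) y + path_sum link_ov (y # R2) + link_ov (last (y # R2)) x"
    using R1 path_sum_append[of "[x]" "R1 @ y # R2" link_ov] path_sum_append[of R1 "y # R2" link_ov]
    by (simp add: cycle_sum_eq)
  moreover have "cycle_sum link_ov (x # y # R2) =
      link_ov x y + path_sum link_ov (y # R2) + link_ov (last (y # R2)) x"
    by (simp add: cycle_sum_eq)
  moreover have "cycle_sum link_ov R1 = path_sum link_ov R1 + link_ov (last R1) (hd R1)"
    using R1 by (simp add: cycle_sum_eq)
  ultimately show "cover_ov ((x # R1 @ y # R2) # rest) \<le> cover_ov ((x # y # R2) # R1 # rest)"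
    using mg by simp
qed (use w R1 in \<open>auto simp: item_cover_def\<close>)

lemma better_cover_merge:
  assumes w: "item_cover P ((x # R) # (y # T) # rest)"
    and mg: "link_ov x (hd (R @ [x])) + link_ov (last (y # T)) y \<le>
      link_ov x y + link_ov (last (y # T)) (hd (R @ [x]))"
  shows "better_cover P ((x # R) # (y # T) # rest) ((x # y # T @ R) # rest)"
proof (rule better_cover_mset[OF w])
  have "cycle_sum link_ov (x # R) + cycle_sum link_ov (y # T) \<le> cycle_sum link_ov (x # y # T @ R)"
  proof (cases "R = []")
    case True
    then show ?thesis using mg by (simp add: cycle_sum_eq)
  next
    case False
    have "cycle_sum link_ov (x # R) = link_ov x (hd R) + path_sum link_ov R + link_ov (last R) x"
      using False path_sum_append[of "[x]" R link_ov] by (simp add: cycle_sum_eq)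
    moreover have "cycle_sum link_ov (x # y # T @ R) = link_ov x y + path_sum link_ov (y # T) +
        link_ov (last (y # T)) (hd R) + path_sum link_ov R + link_ov (last R) x"
      using False path_sum_append[of "[x]" "y # T @ R" link_ov] path_sum_append[of "y # T" R link_ov]
      by (simp add: cycle_sum_eq)
    ultimately show ?thesis using False mg by (simp add: cycle_sum_eq)
  qed
  then show "cover_ov ((x # R) # (y # T) # rest) \<le> cover_ov ((x # y # T @ R) # rest)" by simp
qed (use w in \<open>auto simp: item_cover_def\<close>)

lemma better_cover_detach:
  assumes w: "item_cover P ((x # R) # rest)" and R: "R \<noteq> []"
    and mg: "link_ov x (hd R) + link_ov (last R) x \<le> link_ov x x + link_ov (last R) (hd R)"
  shows "better_cover P ((x # R) # rest) ([x] # R # rest)"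
proof (rule better_cover_mset[OF w])
  have "cycle_sum link_ov (x # R) = link_ov x (hd R) + path_sum link_ov R + link_ov (last R) x"
    using R path_sum_append[of "[x]" R link_ov] by (simp add: cycle_sum_eq)
  moreover have "cycle_sum link_ov R = path_sum link_ov R + link_ov (last R) (hd R)"
    using R by (simp add: cycle_sum_eq)
  ultimately show "cover_ov ((x # R) # rest) \<le> cover_ov ([x] # R # rest)"
    using mg by (simp add: cycle_sum_eq)
qed (use w R in \<open>auto simp: item_cover_def\<close>)

lemma item_cover_flip_inner:
  assumes w: "item_cover P ((x # seg @ R) # rest)"
  shows "item_cover P ((x # rev (map rcI seg) @ R) # rest)"
proof -
  have ne: "\<forall>A\<in>set rest. A \<noteq> []" using w by (simp add: item_cover_def)
  have "item_cover P ((seg @ R @ [x]) # rest)"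
    by (rule item_cover_mset[OF w]) (simp_all add: ne)
  then have "item_cover P ((rev (map rcI seg) @ R @ [x]) # rest)"
    by (rule item_cover_flip_segment)
  then show ?thesis by (rule item_cover_mset) (simp_all add: ne)
qed

lemma better_cover_flip_inner:
  assumes i: "state_inv S P" and w: "item_cover P ((x # seg @ R) # rest)" and seg: "seg \<noteq> []"
    and ly: "last seg = rcI y" and yI: "y \<in> items P"
    and mg: "link_ov x (hd seg) + link_ov (rcI (hd (R @ [x]))) y \<le>
      link_ov x y + link_ov (rcI (hd (R @ [x]))) (hd seg)"
  shows "better_cover P ((x # seg @ R) # rest) ((x # rev (map rcI seg) @ R) # rest)"
proof -
  define T where "T = R @ [x]"
  define e where "e = hd T"
  have T: "T \<noteq> []" "last T = x" by (simp_all add: T_def)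
  have sne: "\<And>u. u \<in> set seg \<Longrightarrow> snd u \<noteq> []" using item_cover_snd[OF i w] by simp
  have eQ: "e \<in> set (concat ((x # seg @ R) # rest))" by (cases R) (auto simp: e_def T_def)
  have ene: "snd e \<noteq> []" using item_cover_snd[OF i w eQ] .
  have yne: "snd y \<noteq> []" using state_inv_snd[OF i yI] .
  have hs: "hd (rev (map rcI seg)) = y" using seg ly by (simp add: hd_rev last_map)
  have ls: "last (rev (map rcI seg)) = rcI (hd seg)" using seg by (simp add: last_rev hd_map)
  have sy1: "link_ov (rcI y) e = link_ov (rcI e) y"
    using link_ov_rcI[of "rcI e" y] ene yne by simp
  have sy2: "link_ov (rcI (hd seg)) e = link_ov (rcI e) (hd seg)"
    using link_ov_rcI[of "rcI e" "hd seg"] ene sne[of "hd seg"] seg by simp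
  have "cycle_sum link_ov (x # seg @ R) = cycle_sum link_ov (seg @ T)"
    using cycle_sum_swap[of link_ov "[x]" "seg @ R"] by (simp add: T_def)
  also have "\<dots> = path_sum link_ov seg + link_ov (rcI y) e + path_sum link_ov T + link_ov x (hd seg)"
    using seg T ly by (simp add: cycle_sum_eq path_sum_append e_def)
  finally have old: "cycle_sum link_ov (x # seg @ R) =
      path_sum link_ov seg + link_ov (rcI y) e + path_sum link_ov T + link_ov x (hd seg)" .
  have "cycle_sum link_ov (x # rev (map rcI seg) @ R) = cycle_sum link_ov (rev (map rcI seg) @ T)"
    using cycle_sum_swap[of link_ov "[x]" "rev (map rcI seg) @ R"] by (simp add: T_def)
  also have "\<dots> = path_sum link_ov seg + link_ov (rcI (hd seg)) e + path_sum link_ov T + link_ov x y"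
    using seg T hs ls path_sum_link_ov_flip[of seg, OF sne]
    by (simp add: cycle_sum_eq path_sum_append e_def)
  finally have new: "cycle_sum link_ov (x # rev (map rcI seg) @ R) =
      path_sum link_ov seg + link_ov (rcI (hd seg)) e + path_sum link_ov T + link_ov x y" .
  show ?thesis using item_cover_flip_inner[OF w] old new sy1 sy2 mg
    by (simp add: better_cover_def sum_seq_len_flip e_def T_def)
qed

lemma better_cover_containing:
  assumes i: "state_inv S P" and w: "item_cover P U" and u: "u \<in> items P"
  shows "\<exists>U'. better_cover P U U' \<and> u \<in> set (concat U')"
proof (cases "u \<in> set (concat U)")
  case True then show ?thesis using better_cover_refl[OF w] by blast
next
  case False
  then have "rcI u \<in> set (concat U)" using item_cover_orientation[OF w u] by simp
  then obtain A where A: "A \<in> set U" "rcI u \<in> set A" by auto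
  have i1: "better_cover P U (A # remove1 A U)" using better_cover_perm[OF w] A(1) by simp
  have i2: "better_cover P (A # remove1 A U) (rev (map rcI A) # remove1 A U)"
    by (rule better_cover_flip[OF i better_cover_item_cover[OF i1]])
  have "u \<in> set (concat (rev (map rcI A) # remove1 A U))"
    using A(2) by (auto simp: image_iff) (metis rcI_rcI)
  then show ?thesis using better_cover_trans[OF i1 i2] by blast
qed

lemma better_cover_first:
  assumes w: "item_cover P U" and x: "x \<in> set (concat U)"
  shows "\<exists>R rest. better_cover P U ((x # R) # rest)"
proof -
  obtain A where A: "A \<in> set U" "x \<in> set A" using x by auto
  obtain l1 l2 where l: "A = l1 @ x # l2" using split_list[OF A(2)] by blast
  have i1: "better_cover P U (A # remove1 A U)" using better_cover_perm[OF w] A(1) by simp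
  have i2: "better_cover P (A # remove1 A U) (((x # l2) @ l1) # remove1 A U)"
    using better_cover_rotate better_cover_item_cover[OF i1] unfolding l by blast
  show ?thesis using better_cover_trans[OF i1 i2] by auto
qed

lemma better_cover_front:
  assumes i: "state_inv S P" and w: "item_cover P U" and x: "x \<in> items P"
  shows "\<exists>R rest. better_cover P U ((x # R) # rest)"
proof -
  obtain U1 where i1: "better_cover P U U1" and x1: "x \<in> set (concat U1)"
    using better_cover_containing[OF i w x] by blast
  then show ?thesis
   
      using better_cover_first[OF better_cover_item_cover[OF i1] x1] better_cover_trans[OF i1]
      by blast
qed

lemma better_cover_second:
  assumes w: "item_cover P (C # rest)" and y: "y \<in> set (concat rest)"
  shows "\<exists>T rest'. better_cover P (C # rest) (C # (y # T) # rest')"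
proof -
  obtain B where B: "B \<in> set rest" "y \<in> set B" using y by auto
  obtain l1 l2 where l: "B = l1 @ y # l2" using split_list[OF B(2)] by blast
  have "mset (B # C # remove1 B rest) = mset (C # rest)" using B(1) by simp
  then have i1: "better_cover P (C # rest) ((l1 @ y # l2) # C # remove1 B rest)"
    using better_cover_perm[OF w] l by simp
  have i2: "better_cover P ((l1 @ y # l2) # C # remove1 B rest) (((y # l2) @ l1) # C # remove1 B rest)"
    using better_cover_rotate[OF better_cover_item_cover[OF i1]] by simp
  have i3: "better_cover P (((y # l2) @ l1) # C # remove1 B rest) (C # ((y # l2) @ l1) # remove1 B rest)"
    by (rule better_cover_perm[OF better_cover_item_cover[OF i2]]) simp
  show ?thesis using better_cover_trans[OF better_cover_trans[OF i1 i2] i3] by auto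
qed

lemma better_cover_flip_rest:
  assumes i: "state_inv S P" and w: "item_cover P (C # rest)" and v: "v \<in> set (concat rest)"
  shows "\<exists>rest'. better_cover P (C # rest) (C # rest') \<and> rcI v \<in> set (concat rest')"
proof -
  obtain B where B: "B \<in> set rest" "v \<in> set B" using v by auto
  have "mset (B # C # remove1 B rest) = mset (C # rest)" using B(1) by simp
  then have i1: "better_cover P (C # rest) (B # C # remove1 B rest)"
    using better_cover_perm[OF w] by simp
  have i2: "better_cover P (B # C # remove1 B rest) (rev (map rcI B) # C # remove1 B rest)"
    by (rule better_cover_flip[OF i better_cover_item_cover[OF i1]])
  have i3: "better_cover P (rev (map rcI B) # C # remove1 B rest) (C # rev (map rcI B) # remove1 B rest)"
    by (rule better_cover_perm[OF better_cover_item_cover[OF i2]]) simp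
  have "rcI v \<in> set (concat (rev (map rcI B) # remove1 B rest))" using B(2) by simp
  then show ?thesis using better_cover_trans[OF better_cover_trans[OF i1 i2] i3] by blast
qed

text \<open>In each of the following rearrangements, the Monge inequality for \<open>link_ov\<close> applies
  because the greedy edge \<open>(x, y)\<close> has maximum overlap among all allowed pairs.\<close>

lemma better_cover_join_rest:
  assumes i: "state_inv S P" and g: "greedy_max P x y" and w: "item_cover P ((x # R) # rest)"
    and y: "y \<in> set (concat rest)"
  shows "\<exists>R' rest'. better_cover P ((x # R) # rest) ((x # y # R') # rest')"
proof -
  obtain T rest' where i1: "better_cover P ((x # R) # rest) ((x # R) # (y # T) # rest')"
    using better_cover_second[OF w y] by blast
  note w1 = better_cover_item_cover[OF i1]
  let ?Q = "set (concat ((x # R) # (y # T) # rest'))"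
  have "hd (R @ [x]) \<in> ?Q" "last (y # T) \<in> ?Q" "x \<in> ?Q" "y \<in> ?Q"
    by (cases R; cases T; auto)+
  then have "link_ov x (hd (R @ [x])) + link_ov (last (y # T)) y \<le>
      link_ov x y + link_ov (last (y # T)) (hd (R @ [x]))"
    using item_cover_link_ov_le[OF i g w1] by (intro link_ov_monge) auto
  then show ?thesis using better_cover_trans[OF i1 better_cover_merge[OF w1]] by blast
qed

lemma better_cover_join_same:
  assumes i: "state_inv S P" and g: "greedy_max P x y" and w: "item_cover P ((x # R) # rest)"
    and y: "y \<in> set R"
  shows "\<exists>R' rest'. better_cover P ((x # R) # rest) ((x # y # R') # rest')"
proof -
  obtain R1 R2 where R: "R = R1 @ y # R2" using split_list[OF y] by blast
  show ?thesis
  proof (cases "R1 = []")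
    case True then show ?thesis using better_cover_refl[OF w] R by auto
  next
    case False
    have w': "item_cover P ((x # R1 @ y # R2) # rest)" using w R by simp
    have "hd R1 \<in> set (concat ((x # R) # rest))" "last R1 \<in> set (concat ((x # R) # rest))"
      "y \<in> set (concat ((x # R) # rest))" using False R by auto
    then have "link_ov x (hd R1) + link_ov (last R1) y \<le> link_ov x y + link_ov (last R1) (hd R1)"
      using item_cover_link_ov_le[OF i g w] by (intro link_ov_monge) auto
    then show ?thesis using better_cover_split[OF w' False] R by blast
  qed
qed

lemma better_cover_join_flipped:
  assumes i: "state_inv S P" and g: "greedy_max P x y" and w: "item_cover P ((x # R) # rest)"
    and ry: "rcI y \<in> set R" and yQ: "y \<notin> set (concat ((x # R) # rest))"
  shows "\<exists>R' rest'. better_cover P ((x # R) # rest) ((x # y # R') # rest')"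
proof -
  have yI: "y \<in> items P" using greedy_max_items[OF g] by simp
  obtain R1 R2 where R: "R = R1 @ rcI y # R2" using split_list[OF ry] by blast
  define seg where "seg = R1 @ [rcI y]"
  have R': "R = seg @ R2" by (simp add: R seg_def)
  have w': "item_cover P ((x # seg @ R2) # rest)" using w R' by simp
  define e where "e = hd (R2 @ [x])"
  have eQ: "e \<in> set (concat ((x # R) # rest))" by (cases R2) (auto simp: e_def R')
  have hs: "hd seg \<in> set (concat ((x # R) # rest))" by (cases R1) (auto simp: seg_def R)
  have "allowed P (rcI e) y"
    using eQ yQ items_rcI[OF item_cover_items[OF w eQ]] yI by (auto simp: allowed_def)
  then have "link_ov x (hd seg) + link_ov (rcI e) y \<le> link_ov x y + link_ov (rcI e) (hd seg)"
    using item_cover_link_ov_le[OF i g w, of x "hd seg"] hs link_ov_le_greedy[OF i g]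
    by (intro link_ov_monge) auto
  then have "better_cover P ((x # seg @ R2) # rest) ((x # rev (map rcI seg) @ R2) # rest)"
    using better_cover_flip_inner[OF i w' _ _ yI] by (simp add: seg_def e_def)
  moreover have "rev (map rcI seg) @ R2 = y # (rev (map rcI R1) @ R2)" by (simp add: seg_def)
  ultimately show ?thesis using R' by auto
qed

lemma better_cover_with_edge:
  assumes i: "state_inv S P" and g: "greedy_max P x y" and xy: "x \<noteq> y" and w: "item_cover P U"
  shows "\<exists>R rest. better_cover P U ((x # y # R) # rest)"
proof -
  have xI: "x \<in> items P" and yI: "y \<in> items P" using greedy_max_items[OF g] by auto
  have rx: "rcI y \<noteq> x" using greedy_max_not_rcI[OF g xy] by auto
  obtain R rest where i1: "better_cover P U ((x # R) # rest)"
    using better_cover_front[OF i w xI] by blast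
  note w1 = better_cover_item_cover[OF i1]
  have "\<exists>R' rest'. better_cover P ((x # R) # rest) ((x # y # R') # rest')"
  proof (cases "y \<in> set (concat ((x # R) # rest))")
    case True
    then consider "y \<in> set R" | "y \<in> set (concat rest)" using xy by auto
    then show ?thesis
      using better_cover_join_same[OF i g w1] better_cover_join_rest[OF i g w1] by cases blast+
  next
    case False
    then have "rcI y \<in> set (concat ((x # R) # rest))" using item_cover_orientation[OF w1 yI] by simp
    then consider "rcI y \<in> set R" | "rcI y \<in> set (concat rest)" using rx by auto
    then show ?thesis
    proof cases
      case 1 then show ?thesis using better_cover_join_flipped[OF i g w1 _ False] by blast
    next
      case 2
      then obtain rest' where i2: "better_cover P ((x # R) # rest) ((x # R) # rest')"
        and "y \<in> set (concat rest')" using better_cover_flip_rest[OF i w1] by fastforce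
      then show ?thesis
       
          using better_cover_join_rest[OF i g better_cover_item_cover[OF i2]] better_cover_trans[OF i2]
        by blast
    qed
  qed
  then show ?thesis using better_cover_trans[OF i1] by blast
qed

lemma better_cover_with_loop:
  assumes i: "state_inv S P" and g: "greedy_max P x x" and w: "item_cover P U"
  shows "\<exists>rest. better_cover P U ([x] # rest)"
proof -
  have xI: "x \<in> items P" using greedy_max_items[OF g] by simp
  obtain R rest where i1: "better_cover P U ((x # R) # rest)"
    using better_cover_front[OF i w xI] by blast
  note w1 = better_cover_item_cover[OF i1]
  show ?thesis
  proof (cases "R = []")
    case True then show ?thesis using i1 by auto
  next
    case False
    have "hd R \<in> set (concat ((x # R) # rest))" "last R \<in> set (concat ((x # R) # rest))"
      using False by auto
    then have "link_ov x (hd R) + link_ov (last R) x \<le> link_ov x x + link_ov (last R) (hd R)"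
      using item_cover_link_ov_le[OF i g w1] by (intro link_ov_monge) auto
    then show ?thesis using better_cover_trans[OF i1 better_cover_detach[OF w1 False]] by blast
  qed
qed

lemma join_item_fresh:
  assumes i: "state_inv S P" and xI: "x \<in> items P"
    and W: "W \<in> items P" "W \<notin> {x, rcI x}"
  shows "W \<noteq> join_item x y \<and> W \<noteq> rcI (join_item x y)"
proof -
  have nx: "snd x \<noteq> []" using state_inv_snd[OF i xI] .
  have "apart x W" "apart (rcI x) W"
    using state_inv_apart[OF i xI W(1)] state_inv_apart[OF i items_rcI[OF xI] W(1)] W(2)
    by (metis insertCI rcI_rcI)+
  then have "hd (snd x) \<notin> set (snd W)" "rc (hd (snd x)) \<notin> set (snd W)"
    using hd_in_set[OF nx] by (auto simp: apart_def)
  moreover have "hd (snd x) \<in> set (snd (join_item x y))"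
    "rc (hd (snd x)) \<in> set (snd (rcI (join_item x y)))"
    using nx by (simp_all add: join_item_def)
  ultimately show ?thesis by (metis snd_rcI)
qed

lemma item_cover_others:
  assumes w: "item_cover P ((x # y # R) # rest)" and xy: "x \<noteq> y"
    and W: "W \<in> set R \<union> set (concat rest)"
  shows "W \<in> items P \<and> W \<notin> {x, rcI x, y, rcI y}"
proof -
  let ?Q = "set (concat ((x # y # R) # rest))"
  have d: "x \<notin> set R \<union> set (concat rest)" "y \<notin> set R \<union> set (concat rest)"
    using w xy by (auto simp: item_cover_def)
  have g: "one_orientation P ?Q" using w by (simp add: item_cover_def)
  have "W \<in> items P" using W g by (auto simp: one_orientation_def)
  moreover have "W \<noteq> rcI v" if "v \<in> {x, y}" for v
  proof
    assume "W = rcI v"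
    then have "rcI v = v" using one_orientation_palindrome[OF g, of v] W that by auto
    then show False using \<open>W = rcI v\<close> W d that by auto
  qed
  ultimately show ?thesis using W d by auto
qed

lemma item_cover_join:
  assumes i: "state_inv S P" and g: "greedy_max P x y" and xy: "x \<noteq> y"
    and w: "item_cover P ((x # y # R) # rest)"
  shows "item_cover (insert (join_item x y) (P - {x, rcI x, y, rcI y})) ((join_item x y # R) # rest)"
proof -
  define Z where "Z = join_item x y"
  define P' where "P' = insert Z (P - {x, rcI x, y, rcI y})"
  let ?Q = "set (concat ((x # y # R) # rest))"
  let ?QR = "set R \<union> set (concat rest)"
  have xI: "x \<in> items P" using greedy_max_items[OF g] by simp
  have g0: "one_orientation P ?Q" using w by (simp add: item_cover_def)
  have others: "\<And>W. W \<in> ?QR \<Longrightarrow> W \<in> items P \<and> W \<notin> {x, rcI x, y, rcI y}"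
    using item_cover_others[OF w xy] by blast
  have fresh: "\<And>W. W \<in> ?QR \<Longrightarrow> W \<noteq> Z \<and> W \<noteq> rcI Z"
    using others join_item_fresh[OF i xI] unfolding Z_def by blast
  have itP': "items P' = insert Z (insert (rcI Z) (items P - {x, rcI x, y, rcI y}))"
    by (simp add: P'_def items_insert items_diff4)
  have "item_cover P' ((Z # R) # rest)"
    unfolding item_cover_def one_orientation_def
  proof (intro conjI ballI impI)
    show "\<And>A. A \<in> set ((Z # R) # rest) \<Longrightarrow> A \<noteq> []" using w by (auto simp: item_cover_def)
    have "Z \<notin> ?QR" using fresh by blast
    then show "distinct (concat ((Z # R) # rest))" using w by (auto simp: item_cover_def)
    show "set (concat ((Z # R) # rest)) \<subseteq> items P'" using others itP' by auto
  next
    fix p assume p: "p \<in> P'"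
    show "p \<in> set (concat ((Z # R) # rest)) \<or> rcI p \<in> set (concat ((Z # R) # rest))"
    proof (cases "p = Z")
      case False
      then have p1: "p \<in> P" "p \<notin> {x, rcI x, y, rcI y}" using p by (auto simp: P'_def)
      then have "p \<in> ?Q \<or> rcI p \<in> ?Q" using g0 by (auto simp: one_orientation_def)
      moreover have "rcI p \<notin> {x, y}" using p1 by auto
      ultimately show ?thesis using p1 by auto
    qed simp
  next
    fix u assume u: "u \<in> set (concat ((Z # R) # rest))"
      and ru: "rcI u \<in> set (concat ((Z # R) # rest))"
    show "rcI u = u"
    proof (cases "u = Z")
      case True
    have "rcI Z \<notin> ?QR" using fresh by blast
    then show ?thesis using ru True by auto
    next
      case False
      then have u0: "u \<in> ?QR" using u by auto
      then have "rcI u \<in> ?QR" using ru fresh[OF u0] by auto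
      then show ?thesis using one_orientation_palindrome[OF g0, of u] u0 by auto
    qed
  qed
  then show ?thesis by (simp add: Z_def P'_def)
qed

lemma cycle_sum_link_ov_join:
  assumes nx: "snd x \<noteq> []" and ny: "snd y \<noteq> []"
  shows "cycle_sum link_ov (x # y # R) = link_ov x y + cycle_sum link_ov (join_item x y # R)"
proof -
  define Z where "Z = join_item x y"
  have oZ1: "\<And>v. link_ov Z v = link_ov y v" using ny by (simp add: link_ov_def Z_def join_item_def)
  have oZ2: "\<And>v. link_ov v Z = link_ov v x" using nx by (simp add: link_ov_def Z_def join_item_def)
  show ?thesis
  proof (cases "R = []")
    case True then show ?thesis using oZ1 oZ2 by (simp add: cycle_sum_eq Z_def)
  next
    case False
    have "cycle_sum link_ov (x # y # R) =
        link_ov x y + (link_ov y (hd R) + path_sum link_ov R) + link_ov (last R) x"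
      using False path_sum_append[of "[y]" R link_ov] by (simp add: cycle_sum_eq)
    moreover have "cycle_sum link_ov (Z # R) =
        (link_ov Z (hd R) + path_sum link_ov R) + link_ov (last R) Z"
      using False path_sum_append[of "[Z]" R link_ov] by (simp add: cycle_sum_eq)
    ultimately show ?thesis using oZ1 oZ2 by (simp add: Z_def)
  qed
qed

lemma item_cover_close:
  assumes w: "item_cover P ([x] # rest)"
  shows "item_cover (P - {x, rcI x}) rest"
proof -
  let ?Q = "set (concat ([x] # rest))"
  let ?QR = "set (concat rest)"
  have d: "distinct (concat rest)" "x \<notin> ?QR" using w by (auto simp: item_cover_def)
  have g: "one_orientation P ?Q" using w by (simp add: item_cover_def)
  have "rcI x \<notin> ?QR"
  proof
    assume r: "rcI x \<in> ?QR"
    then have "rcI x = x" using one_orientation_palindrome[OF g, of x] by auto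
    then show False using r d(2) by simp
  qed
  then show ?thesis
    using w d g unfolding item_cover_def one_orientation_def items_diff2 by auto
qed

section \<open>Runs of MGREEDY-RC\<close>

definition item_vertices :: "item set \<Rightarrow> dna set" where
  "item_vertices P = (\<Union>u\<in>items P. set (snd u))"

definition cycles_inv :: "dna set \<Rightarrow> item set \<Rightarrow> dna list list \<Rightarrow> bool" where
  "cycles_inv S P Cs \<longleftrightarrow> distinct (concat Cs) \<and> (\<forall>C\<in>set Cs. C \<noteq> []) \<and>
     set (concat Cs) \<subseteq> vertices S \<and> (\<forall>v\<in>set (concat Cs). rc v \<in> set (concat Cs) \<longrightarrow> rc v = v) \<and>
     item_vertices P \<inter> set (concat Cs) = {} \<and>
     (\<forall>s\<in>S. s \<in> item_vertices P \<or> s \<in> set (concat Cs) \<or> rc s \<in> set (concat Cs))"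

lemma item_vertices_rc: "v \<in> item_vertices P \<Longrightarrow> rc v \<in> item_vertices P"
  unfolding item_vertices_def using items_rcI by fastforce

lemma item_vertices_join:
  assumes "x \<in> items P" "y \<in> items P"
  shows "item_vertices (insert (join_item x y) (P - {x, rcI x, y, rcI y})) = item_vertices P"
proof -
  let ?D = "{x, rcI x, y, rcI y}"
  let ?M = "\<Union>u\<in>items P - ?D. set (snd u)"
  have "items P = ?D \<union> (items P - ?D)" using assms items_rcI by blast
  then have "item_vertices P = (\<Union>u\<in>?D. set (snd u)) \<union> ?M"
    unfolding item_vertices_def by (metis UN_Un)
  moreover have "item_vertices (insert (join_item x y) (P - ?D)) =
      set (snd (join_item x y)) \<union> set (snd (rcI (join_item x y))) \<union> ?M"
    by (simp add: item_vertices_def items_insert items_diff4 Un_assoc)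
  moreover have "set (snd (join_item x y)) \<union> set (snd (rcI (join_item x y))) = (\<Union>u\<in>?D. set (snd u))"
    by (auto simp: join_item_def)
  ultimately show ?thesis by simp
qed

lemma item_vertices_close:
  assumes i: "state_inv S P" and xI: "x \<in> items P"
  shows "item_vertices (P - {x, rcI x}) = item_vertices P - set (snd x) - rc ` set (snd x)"
proof -
  define M where "M = (\<Union>u\<in>items P - {x, rcI x}. set (snd u))"
  have "apart u x \<and> apart u (rcI x)" if "u \<in> items P - {x, rcI x}" for u
  proof -
    have "x \<noteq> rcI u" using that by (metis DiffD2 insertCI rcI_rcI)
    then show ?thesis
      using state_inv_apart[OF i _ xI, of u] state_inv_apart[OF i _ items_rcI[OF xI], of u] that
      by auto
  qed
  then have "M \<inter> (set (snd x) \<union> rc ` set (snd x)) = {}" by (fastforce simp: M_def apart_def)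
  moreover have "items P = {x, rcI x} \<union> (items P - {x, rcI x})" using xI items_rcI[OF xI] by auto
  then have "item_vertices P = (\<Union>u\<in>{x, rcI x}. set (snd u)) \<union> M"
    unfolding item_vertices_def M_def by (metis UN_Un)
  moreover have "item_vertices (P - {x, rcI x}) = M"
    by (simp add: item_vertices_def items_diff2 M_def)
  ultimately show ?thesis by auto
qed

lemma cycles_inv_join:
  assumes "cycles_inv S P Cs" and "greedy_max P x y"
  shows "cycles_inv S (insert (join_item x y) (P - {x, rcI x, y, rcI y})) Cs"
  using assms item_vertices_join greedy_max_items by (simp add: cycles_inv_def)

lemma cycles_inv_close:
  assumes i: "state_inv S P" and c: "cycles_inv S P Cs" and xI: "x \<in> items P"
  shows "cycles_inv S (P - {x, rcI x}) (Cs @ [snd x])"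
proof -
  have gx: "item_ok S x" using state_inv_ok[OF i xI] .
  have xV: "set (snd x) \<subseteq> item_vertices P" using xI by (auto simp: item_vertices_def)
  then have dx: "set (snd x) \<inter> set (concat Cs) = {}" using c by (auto simp: cycles_inv_def)
  have rc_out: "rc v \<notin> set (concat Cs)" if "v \<in> set (snd x)" for v
  proof -
    have "rc v \<in> item_vertices P" using item_vertices_rc xV that by blast
    then show ?thesis using c unfolding cycles_inv_def by blast
  qed
  have "rc v = v" if v: "v \<in> set (concat (Cs @ [snd x]))" and rv: "rc v \<in> set (concat (Cs @ [snd x]))" for v
  proof -
    consider "v \<in> set (concat Cs)" "rc v \<in> set (concat Cs)" | "v \<in> set (snd x)" "rc v \<in> set (snd x)"
      using v rv rc_out[of v] rc_out[of "rc v"] by auto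
    then show ?thesis using c gx unfolding cycles_inv_def item_ok_def by cases blast+
  qed
  moreover have "distinct (concat (Cs @ [snd x]))"
    using c gx dx by (auto simp: cycles_inv_def item_ok_def)
  moreover have "item_vertices (P - {x, rcI x}) \<inter> set (concat (Cs @ [snd x])) = {}"
    using c by (auto simp: cycles_inv_def item_vertices_close[OF i xI] simp del: snd_rcI)
  moreover have "s \<in> item_vertices (P - {x, rcI x}) \<or> s \<in> set (concat (Cs @ [snd x])) \<or>
      rc s \<in> set (concat (Cs @ [snd x]))" if "s \<in> S" for s
    using c that by (auto simp: cycles_inv_def item_vertices_close[OF i xI] rev_map[symmetric])
  ultimately show ?thesis using c gx by (auto simp: cycles_inv_def item_ok_def)
qed

definition single :: "dna \<Rightarrow> item" where
  "single v = (v, [v])"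

lemma rcI_single: "rcI (single v) = single (rc v)"
  by (simp add: single_def rcI_def)

lemma items_init: "items ((\<lambda>s. (s, [s])) ` S) = single ` vertices S"
  by (auto simp: items_def vertices_def single_def rcI_def image_iff)

lemma state_inv_init:
  assumes inst: "scs_rc_instance S"
  shows "state_inv S ((\<lambda>s. (s, [s])) ` S)"
  unfolding state_inv_def items_init
proof (intro conjI ballI impI)
  fix u assume "u \<in> single ` vertices S"
  then show "item_ok S u" by (auto simp: item_ok_def single_def)
next
  fix u v assume u: "u \<in> single ` vertices S" and v: "v \<in> single ` vertices S"
    and uv: "v \<noteq> u \<and> v \<noteq> rcI u"
  then obtain a b where ab: "a \<in> vertices S" "b \<in> vertices S" "u = single a" "v = single b"
    by blast
  then have "\<not> sublist a b" using uv inst by (auto simp: scs_rc_instance_def)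
  then show "apart u v" using ab uv by (auto simp: apart_def single_def)
next
  fix u v assume u: "u \<in> single ` vertices S" and v: "v \<in> single ` vertices S"
  then show "ov_at_ends u v" using ov_less_lengths by (auto simp: ov_at_ends_def single_def)
qed

lemma cycles_inv_init: "cycles_inv S ((\<lambda>s. (s, [s])) ` S) []"
  by (auto simp: cycles_inv_def item_vertices_def items_init single_def vertices_def)

lemma item_cover_init:
  assumes cc: "is_cycle_cover S cs"
  shows "item_cover ((\<lambda>s. (s, [s])) ` S) (map (map single) cs)"
proof -
  have cc': "(\<forall>c\<in>set cs. c \<noteq> []) \<and> distinct (concat cs) \<and> set (concat cs) \<subseteq> vertices S \<and>
     (\<forall>s\<in>S. (s \<in> set (concat cs) \<or> rc s \<in> set (concat cs)) \<and>
             (s \<noteq> rc s \<longrightarrow> \<not> (s \<in> set (concat cs) \<and> rc s \<in> set (concat cs))))"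
    using cc by (simp add: is_cycle_cover_def)
  have injs: "inj single" by (auto simp: inj_def single_def)
  show ?thesis
    unfolding item_cover_def one_orientation_def map_concat[symmetric]
  proof (intro conjI ballI impI)
    show "\<And>A. A \<in> set (map (map single) cs) \<Longrightarrow> A \<noteq> []" using cc' by auto
    show "distinct (map single (concat cs))"
      using cc' injs by (simp add: distinct_map inj_on_def inj_def)
    show "set (map single (concat cs)) \<subseteq> items ((\<lambda>s. (s, [s])) ` S)"
      using cc' by (auto simp: items_init)
  next
    fix p assume "p \<in> (\<lambda>s. (s, [s])) ` S"
    then obtain s where s: "s \<in> S" "p = single s" by (auto simp: single_def)
    have "s \<in> set (concat cs) \<or> rc s \<in> set (concat cs)" using cc' s(1) by blast
    then show "p \<in> set (map single (concat cs)) \<or> rcI p \<in> set (map single (concat cs))"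
      using s(2) by (auto simp: rcI_single)
  next
    fix u assume u: "u \<in> set (map single (concat cs))" and ru: "rcI u \<in> set (map single (concat cs))"
    then obtain v where v: "v \<in> set (concat cs)" "u = single v" by auto
    have rv: "rc v \<in> set (concat cs)" using ru v injs by (auto simp: rcI_single inj_def)
    obtain s where s: "s \<in> S" "v = s \<or> v = rc s" using v cc' by (auto simp: vertices_def)
    then have "rc v = v" using cc' v rv by (metis rc_rc)
    then show "rcI u = u" using v by (simp add: rcI_single)
  qed
qed

lemma cover_len_init:
  "sum_list (map cyc_weight cs) + cover_ov (map (map single) cs) = cover_len (map (map single) cs)"
proof (induction cs)
  case (Cons zs cs)
  have "cycle_sum link_ov (map single zs) = cycle_sum ov zs"
    by (simp add: cycle_sum_map link_ov_def single_def)
  moreover have "sum_list (map seq_len (map single zs)) = sum_list (map length zs)"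
    by (simp add: seq_len_def single_def comp_def)
  ultimately show ?case using Cons cycle_sum_dst_ov[of zs] by (simp add: cyc_weight_eq_cycle_sum)
qed simp

text \<open>The exchange invariant: the closed cycles \<open>Cs\<close> together with some cover of the current
  strings weigh at most as much as any given cycle cover of \<open>G\<^sub>S\<close>.\<close>

definition cover_bound :: "dna set \<Rightarrow> item set \<Rightarrow> dna list list \<Rightarrow> bool" where
  "cover_bound S P Cs \<longleftrightarrow> (\<forall>cs. is_cycle_cover S cs \<longrightarrow> (\<exists>U. item_cover P U \<and>
     sum_list (map cyc_weight Cs) + cover_len U \<le> sum_list (map cyc_weight cs) + cover_ov U))"

lemma cover_bound_init: "cover_bound S ((\<lambda>s. (s, [s])) ` S) []"
  unfolding cover_bound_def
proof (intro allI impI)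
  fix cs assume "is_cycle_cover S cs"
  then show "\<exists>U. item_cover ((\<lambda>s. (s, [s])) ` S) U \<and>
      sum_list (map cyc_weight []) + cover_len U \<le> sum_list (map cyc_weight cs) + cover_ov U"
    using item_cover_init cover_len_init[of cs] by (intro exI[of _ "map (map single) cs"]) simp
qed

lemma cover_bound_close:
  assumes i: "state_inv S P" and g: "greedy_max P x x" and b: "cover_bound S P Cs"
  shows "cover_bound S (P - {x, rcI x}) (Cs @ [snd x])"
  unfolding cover_bound_def
proof (intro allI impI)
  fix cs assume "is_cycle_cover S cs"
  then obtain U where w: "item_cover P U"
    and le: "sum_list (map cyc_weight Cs) + cover_len U \<le> sum_list (map cyc_weight cs) + cover_ov U"
    using b by (auto simp: cover_bound_def)
  obtain rest where im: "better_cover P U ([x] # rest)"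
    using better_cover_with_loop[OF i g w] by blast
  have "snd x \<noteq> []" using state_inv_snd[OF i] greedy_max_items[OF g] by simp
  then have "cyc_weight (snd x) + link_ov x x = seq_len x" by (rule seq_len_close)
  moreover have "cover_len ([x] # rest) = seq_len x + cover_len rest"
    "cover_ov ([x] # rest) = link_ov x x + cover_ov rest" by (simp_all add: cycle_sum_eq)
  ultimately have "sum_list (map cyc_weight (Cs @ [snd x])) + cover_len rest \<le>
      sum_list (map cyc_weight cs) + cover_ov rest"
    using le im unfolding better_cover_def by simp
  moreover have "item_cover (P - {x, rcI x}) rest"
    using item_cover_close better_cover_item_cover[OF im] by blast
  ultimately show "\<exists>U. item_cover (P - {x, rcI x}) U \<and>
      sum_list (map cyc_weight (Cs @ [snd x])) + cover_len U \<le> sum_list (map cyc_weight cs) + cover_ov U"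
    by blast
qed

lemma cover_bound_join:
  assumes i: "state_inv S P" and g: "greedy_max P x y" and xy: "x \<noteq> y" and b: "cover_bound S P Cs"
  shows "cover_bound S (insert (join_item x y) (P - {x, rcI x, y, rcI y})) Cs"
  unfolding cover_bound_def
proof (intro allI impI)
  fix cs assume "is_cycle_cover S cs"
  then obtain U where w: "item_cover P U"
    and le: "sum_list (map cyc_weight Cs) + cover_len U \<le> sum_list (map cyc_weight cs) + cover_ov U"
    using b by (auto simp: cover_bound_def)
  obtain R rest where im: "better_cover P U ((x # y # R) # rest)"
    using better_cover_with_edge[OF i g xy w] by blast
  have nx: "snd x \<noteq> []" and ny: "snd y \<noteq> []"
    using state_inv_snd[OF i] greedy_max_items[OF g] by auto
  have "cover_len ((x # y # R) # rest) = cover_len ((join_item x y # R) # rest) + link_ov x y"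
    using seq_len_join[OF nx ny] by simp
  moreover have "cover_ov ((x # y # R) # rest) = link_ov x y + cover_ov ((join_item x y # R) # rest)"
    using cycle_sum_link_ov_join[OF nx ny] by simp
  ultimately have "sum_list (map cyc_weight Cs) + cover_len ((join_item x y # R) # rest) \<le>
      sum_list (map cyc_weight cs) + cover_ov ((join_item x y # R) # rest)"
    using le im unfolding better_cover_def by linarith
  moreover have "item_cover (insert (join_item x y) (P - {x, rcI x, y, rcI y})) ((join_item x y # R) # rest)"
    using item_cover_join[OF i g xy better_cover_item_cover[OF im]] .
  ultimately show "\<exists>U. item_cover (insert (join_item x y) (P - {x, rcI x, y, rcI y})) U \<and>
      sum_list (map cyc_weight Cs) + cover_len U \<le> sum_list (map cyc_weight cs) + cover_ov U"
    by blast
qed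

lemma greedy_run_inv:
  assumes "greedy_run S P Cs" and inst: "scs_rc_instance S"
  shows "state_inv S P \<and> cycles_inv S P Cs \<and> cover_bound S P Cs"
  using assms(1)
proof (induction rule: greedy_run.induct)
  case init
  then show ?case using state_inv_init[OF inst] cycles_inv_init cover_bound_init by blast
next
  case (close P Cs x)
  have "x \<in> items P" using greedy_max_items[OF close.hyps(2)] by simp
  then show ?case
    using close state_inv_mono[of S P "P - {x, rcI x}"] cycles_inv_close cover_bound_close by blast
next
  case (join P Cs x y)
  have "insert (pref (fst x) (fst y) @ fst y, snd x @ snd y) (P - {x, rcI x, y, rcI y}) =
      insert (join_item x y) (P - {x, rcI x, y, rcI y})"
    by (simp add: join_item_def mrg2_def)
  then show ?case using join state_inv_join cycles_inv_join cover_bound_join by metis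
qed

lemma item_cover_empty: "item_cover {} U \<Longrightarrow> U = []"
  by (cases U) (auto simp: item_cover_def one_orientation_def items_def)

theorem greedy_cycle_cover:
  assumes "greedy_run S {} Cs" and "scs_rc_instance S"
  shows "is_cycle_cover S Cs"
proof -
  have "cycles_inv S {} Cs" using greedy_run_inv[OF assms] by blast
  then show ?thesis unfolding is_cycle_cover_def cycles_inv_def item_vertices_def items_def
    by (auto simp del: rc_inject) (metis rc_rc)
qed

theorem greedy_cycle_cover_optimal:
  assumes g: "greedy_run S {} Cs" and inst: "scs_rc_instance S"
  shows "sum_list (map cyc_weight Cs) \<le> wCYC S"
proof -
  have opt: "sum_list (map cyc_weight Cs) \<le> sum_list (map cyc_weight cs)" if "is_cycle_cover S cs" for cs
    using greedy_run_inv[OF g inst] that item_cover_empty by (fastforce simp: cover_bound_def)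
  obtain cs where "is_cycle_cover S cs" "wCYC S = sum_list (map cyc_weight cs)"
    using LeastI_ex[of "\<lambda>w. \<exists>cs. is_cycle_cover S cs \<and> w = sum_list (map cyc_weight cs)"]
      greedy_cycle_cover[OF g inst] unfolding wCYC_def by blast
  then show ?thesis using opt by simp
qed

section \<open>Short strings containing the cycle strings\<close>

definition covers :: "dna set \<Rightarrow> dna \<Rightarrow> bool" where
  "covers U w \<longleftrightarrow> (\<forall>u\<in>U. sublist u w \<or> sublist (rc u) w)"

lemma OPT_le: "covers U w \<Longrightarrow> OPT U \<le> length w"
  unfolding OPT_def covers_def by (intro Least_le) blast

lemma OPT_attained:
  assumes "finite U"
  shows "\<exists>w. covers U w \<and> length w = OPT U"
proof -
  obtain us where "set us = U" using finite_list[OF assms] by blast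
  then have "covers U (concat us)" by (auto simp: covers_def intro: sublist_concat)
  then have "\<exists>n w. length w = n \<and> covers U w" by blast
  then have "\<exists>w. length w = OPT U \<and> covers U w"
    unfolding OPT_def covers_def by (rule LeastI_ex)
  then show ?thesis by blast
qed

lemma first_occurrence:
  assumes ne: "ixs \<noteq> []" and sub: "\<forall>i\<in>set ixs. sublist (f i) w"
  shows "\<exists>q i0. i0 \<in> set ixs \<and> prefix (f i0) (drop q w) \<and> (\<forall>i\<in>set ixs. sublist (f i) (drop q w))"
proof -
  define Pq where "Pq q \<longleftrightarrow> (\<exists>i\<in>set ixs. prefix (f i) (drop q w))" for q
  have "sublist (f (hd ixs)) w" using ne sub by simp
  then obtain q1 where "prefix (f (hd ixs)) (drop q1 w)" using sublist_iff_prefix_drop by blast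
  then have ex: "Pq q1" using ne by (auto simp: Pq_def)
  define q0 where "q0 = (LEAST q. Pq q)"
  have "Pq q0" unfolding q0_def using LeastI[of Pq, OF ex] .
  then obtain i0 where i0: "i0 \<in> set ixs" "prefix (f i0) (drop q0 w)" by (auto simp: Pq_def)
  have "sublist (f i) (drop q0 w)" if i: "i \<in> set ixs" for i
  proof -
    obtain qi where qi: "prefix (f i) (drop qi w)" using sub i sublist_iff_prefix_drop by blast
    then have "Pq qi" using i by (auto simp: Pq_def)
    then have le: "q0 \<le> qi" unfolding q0_def by (rule Least_le)
    have "drop qi w = drop (qi - q0) (drop q0 w)" using le by simp
    then show ?thesis using qi sublist_iff_prefix_drop by metis
  qed
  then show ?thesis using i0 by blast
qed

lemma dst_le_offset:
  assumes pa: "prefix a w" and pb: "prefix b (drop q w)" and q: "1 \<le> q" and nsub: "\<not> sublist b a"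
  shows "dst a b \<le> q"
proof (cases "length a \<le> q")
  case True then show ?thesis by (simp add: dst_def)
next
  case False
  define k where "k = length a - q"
  have la: "length a \<le> length w" using pa by (simp add: prefix_conv_nth)
  have qw: "q \<le> length w" using False la by simp
  have wa: "\<And>j. j < length a \<Longrightarrow> w ! j = a ! j" using pa by (simp add: prefix_conv_nth)
  have wb: "\<And>t. t < length b \<Longrightarrow> w ! (q + t) = b ! t"
    using pb qw by (simp add: prefix_conv_nth)
  have kb: "k < length b"
  proof (rule ccontr)
    assume "\<not> k < length b"
    then have "q + length b \<le> length a" using False by (simp add: k_def)
    then have "sublist b a" unfolding sublist_conv_nth
      using wa wb by (intro exI[of _ q]) auto
    then show False using nsub by simp
  qed
  have "k \<le> ov a b"
  proof (rule ov_geI)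
    fix t assume t: "t < k"
    have "a ! (length a - k + t) = a ! (q + t)" using False by (simp add: k_def)
    also have "\<dots> = w ! (q + t)" using wa[of "q + t"] t by (simp add: k_def)
    also have "\<dots> = b ! t" using wb[of t] t kb by simp
    finally show "a ! (length a - k + t) = b ! t" .
  qed (use q False kb in \<open>auto simp: k_def\<close>)
  then show ?thesis by (simp add: dst_def k_def)
qed

lemma length_mrg_Cons_Cons_le:
  assumes pa: "prefix a w" and pb: "prefix b (drop q w)" and q: "1 \<le> q" and nsub: "\<not> sublist b a"
    and rest: "length (mrg (b # L)) \<le> length (drop q w)"
  shows "length (mrg (a # b # L)) \<le> length w"
proof -
  have "length (mrg (a # b # L)) = dst a b + length (mrg (b # L))" by (simp add: length_pref_dst)
  moreover have "dst a b \<le> q" using dst_le_offset[OF pa pb q nsub] .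
  moreover have "dst a b \<le> length w"
    using pa by (auto simp: dst_def prefix_conv_nth)
  ultimately show ?thesis using rest by simp
qed

text \<open>The witness orders the strings by their first occurrences in \<open>w\<close>.\<close>

lemma mrg_reorder_from_prefix:
  fixes f :: "'i \<Rightarrow> dna"
  assumes "prefix (f i0) w" "i0 \<notin> set rest" "distinct rest" "\<forall>i\<in>set rest. sublist (f i) w"
    "\<forall>i\<in>set (i0 # rest). \<forall>j\<in>set (i0 # rest). i \<noteq> j \<longrightarrow> \<not> sublist (f i) (f j)"
  shows "\<exists>L. mset L = mset rest \<and> length (mrg (map f (i0 # L))) \<le> length w"
  using assms
proof (induction "length rest" arbitrary: w i0 rest rule: less_induct)
  case less
  show ?case
  proof (cases "rest = []")
    case True
    then show ?thesis using less.prems(1) by (intro exI[of _ "[]"]) (auto simp: prefix_conv_nth)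
  next
    case False
    obtain q o2 where o2: "o2 \<in> set rest" "prefix (f o2) (drop q w)"
      and allsub: "\<forall>i\<in>set rest. sublist (f i) (drop q w)"
      using first_occurrence[OF False less.prems(4)] by blast
    have oo2: "i0 \<noteq> o2" using o2(1) less.prems(2) by auto
    have q1: "1 \<le> q"
    proof (rule ccontr)
      assume "\<not> 1 \<le> q"
      then have "q = 0" by simp
      then have "prefix (f o2) w" using o2(2) by simp
      then have "prefix (f o2) (f i0) \<or> prefix (f i0) (f o2)"
        using less.prems(1) prefix_same_cases by blast
      then show False using less.prems(5) oo2 o2(1) prefix_imp_sublist by fastforce
    qed
    define rest' where "rest' = remove1 o2 rest"
    have len: "length rest' < length rest"
      using o2(1) length_pos_if_in_set[OF o2(1)] by (simp add: rest'_def length_remove1)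
    have srest': "set rest' = set rest - {o2}" using less.prems(3) by (simp add: rest'_def)
    have "\<exists>L. mset L = mset rest' \<and> length (mrg (map f (o2 # L))) \<le> length (drop q w)"
    proof (rule less.hyps[OF len])
      show "prefix (f o2) (drop q w)" by (rule o2(2))
      show "o2 \<notin> set rest'" using srest' by simp
      show "distinct rest'" using less.prems(3) by (simp add: rest'_def)
      show "\<forall>i\<in>set rest'. sublist (f i) (drop q w)" using allsub srest' by simp
      show "\<forall>i\<in>set (o2 # rest'). \<forall>j\<in>set (o2 # rest'). i \<noteq> j \<longrightarrow> \<not> sublist (f i) (f j)"
        using less.prems(5) srest' o2(1) by auto
    qed
    then obtain L' where L': "mset L' = mset rest'"
      "length (mrg (map f (o2 # L'))) \<le> length (drop q w)" by blast
    have "length (mrg (f i0 # f o2 # map f L')) \<le> length w"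
      by (rule length_mrg_Cons_Cons_le[OF less.prems(1) o2(2) q1])
        (use less.prems(5) oo2 o2(1) L'(2) in auto)
    moreover have "mset (o2 # L') = mset rest" using L'(1) o2(1) by (simp add: rest'_def)
    ultimately show ?thesis by (intro exI[of _ "o2 # L'"]) auto
  qed
qed

lemma mrg_reorder_le:
  fixes f :: "'i \<Rightarrow> dna"
  assumes ne: "ixs \<noteq> []" and d: "distinct ixs" and sub: "\<forall>i\<in>set ixs. sublist (f i) w"
    and pw: "\<forall>i\<in>set ixs. \<forall>j\<in>set ixs. i \<noteq> j \<longrightarrow> \<not> sublist (f i) (f j)"
  shows "\<exists>L. mset L = mset ixs \<and> length (mrg (map f L)) \<le> length w"
proof -
  obtain q i0 where i0: "i0 \<in> set ixs" "prefix (f i0) (drop q w)"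
    and allsub: "\<forall>i\<in>set ixs. sublist (f i) (drop q w)"
    using first_occurrence[OF ne sub] by blast
  have "\<exists>L. mset L = mset (remove1 i0 ixs) \<and>
      length (mrg (map f (i0 # L))) \<le> length (drop q w)"
  proof (rule mrg_reorder_from_prefix)
    show "prefix (f i0) (drop q w)" by (rule i0(2))
    show "i0 \<notin> set (remove1 i0 ixs)" using d by simp
    show "distinct (remove1 i0 ixs)" using d by simp
    show "\<forall>i\<in>set (remove1 i0 ixs). sublist (f i) (drop q w)"
      using allsub set_remove1_subset[of i0 ixs] by blast
    show "\<forall>i\<in>set (i0 # remove1 i0 ixs). \<forall>j\<in>set (i0 # remove1 i0 ixs).
        i \<noteq> j \<longrightarrow> \<not> sublist (f i) (f j)"
      using pw i0(1) set_remove1_subset[of i0 ixs] by auto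
  qed
  then obtain L where L: "mset L = mset (remove1 i0 ixs)"
    "length (mrg (map f (i0 # L))) \<le> length (drop q w)" by blast
  have "mset (i0 # L) = mset ixs" using L(1) i0(1) by simp
  moreover have "length (mrg (map f (i0 # L))) \<le> length w" using L(2) by simp
  ultimately show ?thesis by blast
qed


lemma length_mrg_map_le:
  fixes f g :: "'i \<Rightarrow> dna"
  assumes "\<forall>i\<in>set L. prefix (f i) (g i) \<and> suffix (f i) (g i)"
  shows "length (mrg (map g L)) \<le>
    length (mrg (map f L)) + sum_list (map (\<lambda>i. length (g i) - length (f i)) L)"
  using assms
proof (induction L rule: induct_list012)
  case (3 i j L)
  have fi: "prefix (f i) (g i)" "suffix (f i) (g i)" and fj: "prefix (f j) (g j)" using 3(3) by auto
  have ov: "ov (f i) (f j) \<le> ov (g i) (g j)" using ov_le_of_suffix_prefix[OF fi(2) fj] .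
  have li: "length (f i) \<le> length (g i)" using fi(1) by (simp add: prefix_conv_nth)
  have "dst (g i) (g j) \<le> dst (f i) (f j) + (length (g i) - length (f i))"
    using ov li ov_le_length_left[of "f i" "f j"] by (simp add: dst_def)
  moreover have "length (mrg (map g (j # L))) \<le>
      length (mrg (map f (j # L))) + sum_list (map (\<lambda>i. length (g i) - length (f i)) (j # L))"
    using 3(2) 3(3) by simp
  ultimately show ?case by (simp add: length_pref_dst)
qed simp_all

lemma superstring_of_extensions:
  fixes f g :: "'i \<Rightarrow> dna"
  assumes d: "distinct ixs" and sub: "\<forall>i\<in>set ixs. sublist (f i) w"
    and free: "\<forall>i\<in>set ixs. \<forall>j\<in>set ixs. i \<noteq> j \<longrightarrow> \<not> sublist (f i) (f j)"
    and ext: "\<forall>i\<in>set ixs. prefix (f i) (g i) \<and> suffix (f i) (g i)"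
  shows "\<exists>W. (\<forall>i\<in>set ixs. sublist (g i) W) \<and>
    length W \<le> length w + sum_list (map (\<lambda>i. length (g i) - length (f i)) ixs)"
proof (cases "ixs = []")
  case True then show ?thesis by (intro exI[of _ "[]"]) simp
next
  case False
  obtain L where L: "mset L = mset ixs" "length (mrg (map f L)) \<le> length w"
    using mrg_reorder_le[OF False d sub free] by blast
  have setL: "set L = set ixs" using L(1) by (metis set_mset_mset)
  have "length (mrg (map g L)) \<le>
      length (mrg (map f L)) + sum_list (map (\<lambda>i. length (g i) - length (f i)) L)"
    using ext setL by (intro length_mrg_map_le) auto
  also have "sum_list (map (\<lambda>i. length (g i) - length (f i)) L) =
      sum_list (map (\<lambda>i. length (g i) - length (f i)) ixs)"
    by (rule sum_list_map_mset[OF L(1)])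
  moreover have "\<forall>i\<in>set ixs. sublist (g i) (mrg (map g L))"
    using setL by (auto intro: sublist_mrg)
  ultimately show ?thesis using L(2) by (intro exI[of _ "mrg (map g L)"]) auto
qed

lemma cycle_string:
  assumes "xC_props zs x"
  shows "\<exists>z y. z \<in> set zs \<and> sublist x y \<and> prefix z y \<and> suffix z y \<and>
    length y = cyc_weight zs + length z"
proof -
  obtain j where j: "1 \<le> j" "j \<le> length zs" and x: "sublist x (mrg (zs ! (j - 1) # rotate j zs))"
    using assms unfolding xC_props_def by auto
  define r where "r = rotate j zs"
  have r: "r \<noteq> []" "last r = zs ! (j - 1)" using j last_rotate[OF j] by (auto simp: r_def)
  have "zs ! (j - 1) \<in> set zs" using j by simp
  then show ?thesis
    using x mrg_around_cycle[OF r(1)] r(2) cyc_weight_rotate[of j zs] unfolding r_def by metis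
qed

lemma oriented_cycle_string:
  assumes "xC_props zs x" and w: "\<forall>v\<in>set zs. sublist v w \<or> sublist (rc v) w"
  shows "\<exists>z y. z \<in> set zs \<union> rc ` set zs \<and> sublist z w \<and> prefix z y \<and> suffix z y \<and>
    length y = cyc_weight zs + length z \<and> (sublist x y \<or> sublist (rc x) y)"
proof -
  obtain z y where z: "z \<in> set zs" "sublist x y" "prefix z y" "suffix z y"
    "length y = cyc_weight zs + length z"
    using cycle_string[OF assms(1)] by blast
  show ?thesis
  proof (cases "sublist z w")
    case True then show ?thesis using z by blast
  next
    case False
    then have "sublist (rc z) w" using w z(1) by blast
    moreover have "prefix (rc z) (rc y)" "suffix (rc z) (rc y)"
      using z(3,4) prefix_imp_suffix_rc suffix_imp_prefix_rc by auto
    ultimately show ?thesis using z sublist_rc[OF z(2)] by (intro exI[of _ "rc z"] exI[of _ "rc y"]) auto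
  qed
qed

lemma cycle_cover_distinct:
  assumes "is_cycle_cover S Cs"
  shows "distinct Cs" and "\<And>A B. A \<in> set Cs \<Longrightarrow> B \<in> set Cs \<Longrightarrow> A \<noteq> B \<Longrightarrow> set A \<inter> set B = {}"
proof -
  have d: "distinct (concat Cs)" and ne: "\<forall>C\<in>set Cs. C \<noteq> []"
    using assms by (auto simp: is_cycle_cover_def)
  have "removeAll [] Cs = Cs" using ne by (auto intro: removeAll_id)
  then show "distinct Cs" using d distinct_concat_iff[of Cs] by simp
  show "\<And>A B. A \<in> set Cs \<Longrightarrow> B \<in> set Cs \<Longrightarrow> A \<noteq> B \<Longrightarrow> set A \<inter> set B = {}"
    using d distinct_concat_iff[of Cs] by blast
qed

lemma cycle_cover_vertices_apart:
  assumes inst: "scs_rc_instance S" and cc: "is_cycle_cover S Cs"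
    and A: "A \<in> set Cs" "a \<in> set A" "a' \<in> {a, rc a}"
    and B: "B \<in> set Cs" "b \<in> set B" "b' \<in> {b, rc b}" and AB: "A \<noteq> B"
  shows "\<not> sublist a' b'"
proof -
  have V: "set (concat Cs) \<subseteq> vertices S" using cc by (simp add: is_cycle_cover_def)
  have ab: "a \<noteq> b" using cycle_cover_distinct(2)[OF cc A(1) B(1) AB] A(2) B(2) by auto
  have "a \<noteq> rc b"
  proof
    assume e: "a = rc b"
    obtain s where s: "s \<in> S" "b = s \<or> b = rc s" using V A B by (auto simp: vertices_def)
    then have "s \<in> set (concat Cs) \<and> rc s \<in> set (concat Cs)" using e A B by auto
    then have "s = rc s" using cc s(1) by (auto simp: is_cycle_cover_def)
    then show False using e ab s(2) by (metis rc_rc)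
  qed
  then have "a' \<noteq> b'" using ab A(3) B(3) by (auto simp del: rc_inject) (metis rc_rc)+
  moreover have "a' \<in> vertices S" "b' \<in> vertices S" using V A B vertices_rc by auto
  ultimately show ?thesis using inst by (auto simp: scs_rc_instance_def)
qed

lemma covers_vertex: "covers S w \<Longrightarrow> v \<in> vertices S \<Longrightarrow> sublist v w \<or> sublist (rc v) w"
  by (auto simp: covers_def vertices_def)

lemma cover_of_cycle_strings:
  assumes inst: "scs_rc_instance S" and cc: "is_cycle_cover S Cs" and w: "covers S w"
    and xC: "\<forall>zs\<in>set Cs. xC_props zs (xC zs)"
  shows "\<exists>W. covers (xC ` set Cs) W \<and> length W \<le> length w + sum_list (map cyc_weight Cs)"
proof -
  define good where "good zs z y \<longleftrightarrow> z \<in> set zs \<union> rc ` set zs \<and> sublist z w \<and>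
    prefix z y \<and> suffix z y \<and> length y = cyc_weight zs + length z \<and>
    (sublist (xC zs) y \<or> sublist (rc (xC zs)) y)" for zs z y
  have "\<exists>z y. good zs z y" if zs: "zs \<in> set Cs" for zs
  proof -
    have "set zs \<subseteq> vertices S" using cc zs by (auto simp: is_cycle_cover_def)
    then show ?thesis
      using oriented_cycle_string[of zs "xC zs" w] xC zs covers_vertex[OF w]
      unfolding good_def by blast
  qed
  then obtain z y where zy: "\<And>zs. zs \<in> set Cs \<Longrightarrow> good zs (z zs) (y zs)" by metis
  have "\<not> sublist (z A) (z B)" if AB: "A \<in> set Cs" "B \<in> set Cs" "A \<noteq> B" for A B
  proof -
    obtain a b where "a \<in> set A" "z A \<in> {a, rc a}" "b \<in> set B" "z B \<in> {b, rc b}"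
      using zy[OF AB(1)] zy[OF AB(2)] unfolding good_def by blast
    then show ?thesis
      using cycle_cover_vertices_apart[OF inst cc AB(1) _ _ AB(2) _ _ AB(3)] by blast
  qed
  then obtain W where W: "\<forall>zs\<in>set Cs. sublist (y zs) W"
    "length W \<le> length w + sum_list (map (\<lambda>zs. length (y zs) - length (z zs)) Cs)"
    using superstring_of_extensions[OF cycle_cover_distinct(1)[OF cc], of z w y] zy
    unfolding good_def by blast
  have "covers (xC ` set Cs) W"
    using W(1) zy unfolding covers_def good_def by (metis imageE sublist_order.order.trans)
  moreover have "length W \<le> length w + sum_list (map cyc_weight Cs)"
    using W(2) zy unfolding good_def by (simp cong: map_cong)
  ultimately show ?thesis by blast
qed

theorem lemma17:
  fixes S :: "dna set" and Cs :: "dna list list" and xC :: "dna list \<Rightarrow> dna"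
  assumes "scs_rc_instance S"
    and "greedy_run S {} Cs"
    and "\<forall>zs\<in>set Cs. xC_props zs (xC zs)"
  shows "OPT (xC ` set Cs) \<le> OPT S + wCYC S"
proof -
  note inst = assms(1) and g = assms(2)
  have "finite S" using inst by (simp add: scs_rc_instance_def)
  then obtain w where w: "covers S w" "length w = OPT S" using OPT_attained by blast
  obtain W where W: "covers (xC ` set Cs) W" "length W \<le> length w + sum_list (map cyc_weight Cs)"
    using cover_of_cycle_strings[OF inst greedy_cycle_cover[OF g inst] w(1) assms(3)] by blast
  have "OPT (xC ` set Cs) \<le> length W" using W(1) by (rule OPT_le)
  also have "\<dots> \<le> OPT S + sum_list (map cyc_weight Cs)" using W(2) w(2) by simp
  also have "\<dots> \<le> OPT S + wCYC S" using greedy_cycle_cover_optimal[OF g inst] by simp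
  finally show ?thesis .
qed

end
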